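(* In the setting of the context with $q=p+\nu$, suppose that for every $i\ge1$ the point $x_i$ is a minimizer of $x\mapsto\tilde f(x;\hat x_{i-1})+\frac{L^{\alpha}}{c_q\lambda_i^{1-\alpha}\theta_2^{\alpha}q}\|x-\hat x_{i-1}\|^{q}$ and that $$0<\theta_1\le L\lambda_i\le\theta_2\le1$$ for constants $\theta_1\le\theta_2$. Then for all $k\ge1$, $$A_k\ge\frac{\theta_1c_q\gamma}{L}\Bigl(\frac{k}{p+\nu}\Bigr)^{p+\nu},\qquad f(x_k)-f(x^* )\le\frac{h(x^*;x_0)}{A_k}\le\frac{L}{\theta_1c_q\gamma}h(x^*;x_0)\Bigl(\frac{p+\nu}{k}\Bigr)^{p+\nu}.$$
   Context: Norm conventions: $\|\cdot\|$ a norm on $\mathbb{R}^d$, $\|u\|_*:=\max\{\langle u,x\rangle:\|x\|\le1\}$; for a symmetric $p$-linear form $T$, $\|T\|_*:=\max\{T[y_1,\dots,y_p]:\|y_j\|\le1\}$, $T[h]^i:=T[h,\dots,h]$; $(p,\nu,L)$-Hölder continuous derivatives means $\frac1{(p-1)!}\|\nabla^pg(x)-\nabla^pg(y)\|_*\le L\|x-y\|^\nu$ for all $x,y$; $\varphi$ is $(s,\sigma)$-uniformly convex if $\varphi(y)\ge\varphi(x)+\langle\zeta,y-x\rangle+\frac\sigma s\|y-x\|^s$ for all $y$, all $x$ with $\partial\varphi(x)\ne\emptyset$, all $\zeta\in\partial\varphi(x)$. Setting: $f=g+l$, $g:\mathbb{R}^d\to\mathbb{R}$ convex with $(p,\nu,L)$-Hölder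 continuous derivatives ($p\in\{1,2,\dots\}$, $\nu\in[0,1]$, $p+\nu\ge2$, $L>0$), $l$ proper closed convex, $x^*$ a minimizer of $f$. $\Phi_y(x):=g(y)+\sum_{i=1}^p\frac1{i!}\nabla^ig(y)[x-y]^i$, $\hat f(x;y):=g(y)+\langle\nabla g(y),x-y\rangle+l(x)$, $\tilde f(x;y):=\Phi_y(x)+l(x)$. $\gamma,\beta>0$ with $\frac1q\|\cdot\|^q$ $(q,\beta)$-uniformly convex; $c_q:=(\beta(q-1)^{1-q})^{1/q}$; $x_0\in\mathrm{dom}\,l$; $h(\cdot;x_0):\mathbb{R}^d\to\mathbb{R}$ convex, $h\ge0$, $h(x;x_0)=0$ iff $x=x_0$, $(q,\gamma)$-uniformly convex. $\alpha\in[0,1]$. $a_i>0$, $A_0:=0$, $A_i:=A_{i-1}+a_i$, $\lambda_i:=\frac{a_i^q}{c_q\gamma A_i^{q-1}}$. Iterates: $z_0:=x_0$; for $i\ge1$, $\hat x_{i-1}:=\frac{a_i}{A_i}z_{i-1}+\frac{A_{i-1}}{A_i}x_{i-1}$, $x_i$ as in the claim, $z_i:=\operatorname{argmin}_x\{\sum_{j=1}^ia_j\hat f(x;x_j)+h(x;x_0)\}$. *)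

theory Defs
  imports "HOL-Analysis.Analysis" "HOL-Library.Extended_Real"
begin

definition is_norm :: "('a::real_vector \<Rightarrow> real) \<Rightarrow> bool" where
  "is_norm N \<longleftrightarrow> (\<forall>x. N x \<ge> 0) \<and> (\<forall>x. N x = 0 \<longleftrightarrow> x = 0)
     \<and> (\<forall>c x. N (c *\<^sub>R x) = \<bar>c\<bar> * N x) \<and> (\<forall>x y. N (x + y) \<le> N x + N y)"

definition form_dual_norm :: "('a \<Rightarrow> real) \<Rightarrow> nat \<Rightarrow> ('a list \<Rightarrow> real) \<Rightarrow> real" where
  "form_dual_norm N p T = Sup {T ys | ys. length ys = p \<and> (\<forall>y\<in>set ys. N y \<le> 1)}"

text \<open>D i x is the i-th derivative of g at x as an i-linear form on lists of length i:
  D 0 x [] = g x, and D (i+1) x (v # hs) is the (Frechet) derivative of y \<mapsto> D i y hs at x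
  in direction v, for i < p.\<close>
definition has_derivs :: "('a::real_normed_vector \<Rightarrow> real) \<Rightarrow> (nat \<Rightarrow> 'a \<Rightarrow> 'a list \<Rightarrow> real) \<Rightarrow> nat \<Rightarrow> bool" where
  "has_derivs g D p \<longleftrightarrow> (\<forall>x. D 0 x [] = g x) \<and>
     (\<forall>i<p. \<forall>x hs. length hs = i \<longrightarrow>
        ((\<lambda>y. D i y hs) has_derivative (\<lambda>v. D (Suc i) x (v # hs))) (at x))"

definition holder_derivs :: "('a::real_normed_vector \<Rightarrow> real) \<Rightarrow> ('a \<Rightarrow> real) \<Rightarrow> (nat \<Rightarrow> 'a \<Rightarrow> 'a list \<Rightarrow> real)
     \<Rightarrow> nat \<Rightarrow> real \<Rightarrow> real \<Rightarrow> bool" where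
  "holder_derivs g N D p \<nu> L \<longleftrightarrow> has_derivs g D p \<and>
     (\<forall>x y. form_dual_norm N p (\<lambda>ys. D p x ys - D p y ys) / fact (p - 1) \<le> L * N (x - y) powr \<nu>)"

definition subdiff :: "('a::real_inner \<Rightarrow> real) \<Rightarrow> 'a \<Rightarrow> 'a set" where
  "subdiff \<phi> x = {\<zeta>. \<forall>y. \<phi> y \<ge> \<phi> x + inner \<zeta> (y - x)}"

definition unif_convex :: "('a \<Rightarrow> real) \<Rightarrow> real \<Rightarrow> real \<Rightarrow> ('a::real_inner \<Rightarrow> real) \<Rightarrow> bool" where
  "unif_convex N s \<sigma> \<phi> \<longleftrightarrow> (\<forall>x. \<forall>\<zeta>\<in>subdiff \<phi> x. \<forall>y.
      \<phi> y \<ge> \<phi> x + inner \<zeta> (y - x) + \<sigma> / s * N (y - x) powr s)"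

definition proper_closed_convex :: "('a::real_normed_vector \<Rightarrow> ereal) \<Rightarrow> bool" where
  "proper_closed_convex l \<longleftrightarrow> (\<forall>x. l x \<noteq> -\<infinity>) \<and> (\<exists>x. l x \<noteq> \<infinity>) \<and>
     convex {(x, t::real). l x \<le> ereal t} \<and> closed {(x, t::real). l x \<le> ereal t}"

definition taylor_model :: "(nat \<Rightarrow> 'a \<Rightarrow> 'a list \<Rightarrow> real) \<Rightarrow> nat \<Rightarrow> 'a \<Rightarrow> 'a::real_vector \<Rightarrow> real" where
  "taylor_model D p y x = (\<Sum>i=0..p. D i y (replicate i (x - y)) / fact i)"

end

theory Submission
  imports Defs
begin

text \<open>
  Let
  psi_i(y) = h(y) + sum_{j <= i} a_j (g(x_j) + Dg(x_j)[y - x_j] + l(y)),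
  so that z_i minimizes psi_i and, h being uniformly convex,
  psi_i(y) >= psi_i(z_i) + gamma/q ||y - z_i||^q.
  By induction A_i f(x_i) <= psi_i(z_i). Indeed x_{i+1} minimizes the regularized Taylor model
  at xhat_i, and Hoelder continuity of D^p g together with Young's inequality turns its
  first-order optimality condition into
  f(x_{i+1}) <= g(x_{i+1}) + Dg(x_{i+1})[u - x_{i+1}] + l(u) + ||u - xhat_i||^q / (c_q lambda_{i+1} q)
  for every u. For u = (A_i x_i + a_{i+1} z_{i+1}) / A_{i+1} the definition of lambda_{i+1}
  turns the last term into exactly the growth term gamma/q ||z_{i+1} - z_i||^q of psi_i.
  As psi_k <= A_k f + h by convexity of g, this gives A_k (f(x_k) - f(x*)) <= h(x*).
  Finally theta_1 <= L lambda_i means a_i^q >= (theta_1 c_q gamma / L) A_i^(q-1), so that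
  A_k^(1/q) grows at least linearly in k.
\<close>

section \<open>Multilinear forms\<close>

definition multilinear :: "nat \<Rightarrow> ('a::real_vector list \<Rightarrow> real) \<Rightarrow> bool" where
  "multilinear k T \<longleftrightarrow> (\<forall>pre post. length pre + length post + 1 = k \<longrightarrow> linear (\<lambda>v. T (pre @ v # post)))"

lemma linear_scaleR_real_valued: "linear (f::'a::real_vector \<Rightarrow> real) \<Longrightarrow> f (c *\<^sub>R x) = c * f x"
  by (simp add: linear_scale)

lemma multilinear_Cons:
  assumes "multilinear (Suc k) T" shows "multilinear k (\<lambda>hs. T (u # hs))"
  unfolding multilinear_def
proof (intro allI impI)
  fix pre post :: "'a list" assume "length pre + length post + 1 = k"
  then have "length (u#pre) + length post + 1 = Suc k" by simp
  then have "linear (\<lambda>v. T ((u#pre) @ v # post))" using assms unfolding multilinear_def by blast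
  then show "linear (\<lambda>v. T (u # pre @ v # post))" by simp
qed

lemma multilinear_linear_head:
  assumes "multilinear (Suc k) T" "length hs = k" shows "linear (\<lambda>v. T (v # hs))"
proof -
  have "length ([]::'a list) + length hs + 1 = Suc k" using assms by simp
  then have "linear (\<lambda>v. T ([] @ v # hs))" using assms(1) unfolding multilinear_def by blast
  then show ?thesis by simp
qed

lemma multilinear_basis_expansion:
  fixes T :: "'a::euclidean_space list \<Rightarrow> real"
  assumes "multilinear (Suc k) T" "length hs = k"
  shows "T (v # hs) = (\<Sum>b\<in>Basis. (v \<bullet> b) * T (b # hs))"
proof -
  have lin: "linear (\<lambda>v. T (v # hs))" using multilinear_linear_head[OF assms] .
  have "T (v # hs) = T ((\<Sum>b\<in>Basis. (v \<bullet> b) *\<^sub>R b) # hs)" by (simp add: euclidean_representation)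
  also have "\<dots> = (\<Sum>b\<in>Basis. T (((v \<bullet> b) *\<^sub>R b) # hs))"
    by (simp add: linear_sum[OF lin])
  also have "\<dots> = (\<Sum>b\<in>Basis. (v \<bullet> b) * T (b # hs))"
    using linear_scaleR_real_valued[OF lin] by simp
  finally show ?thesis .
qed

lemma multilinear_bounded:
  fixes T :: "'a::euclidean_space list \<Rightarrow> real"
  assumes "multilinear k T"
  shows "\<exists>C\<ge>0. \<forall>ys. length ys = k \<longrightarrow> \<bar>T ys\<bar> \<le> C * prod_list (map norm ys)"
  using assms
proof (induction k arbitrary: T)
  case 0
  show ?case by (rule exI[of _ "\<bar>T []\<bar>"]) simp
next
  case (Suc k)
  have "\<forall>b. \<exists>C\<ge>0. \<forall>ys. length ys = k \<longrightarrow> \<bar>T (b # ys)\<bar> \<le> C * prod_list (map norm ys)"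
    using Suc.IH[OF multilinear_Cons[OF Suc.prems]] by blast
  then have "\<exists>C. \<forall>b. C b \<ge> 0 \<and> (\<forall>ys. length ys = k \<longrightarrow> \<bar>T (b # ys)\<bar> \<le> C b * prod_list (map norm ys))"
    by (rule choice)
  then obtain C where C: "\<And>b. C b \<ge> 0" "\<And>b ys. length ys = k \<Longrightarrow> \<bar>T (b # ys)\<bar> \<le> C b * prod_list (map norm ys)"
    by blast
  show ?case
  proof (intro exI[of _ "\<Sum>b\<in>Basis. C b"] conjI allI impI)
    show "0 \<le> (\<Sum>b\<in>Basis. C b)" by (simp add: C sum_nonneg)
    fix ys :: "'a list" assume len: "length ys = Suc k"
    then obtain v hs where ys: "ys = v # hs" and hs: "length hs = k" by (cases ys) auto
    have "T ys = (\<Sum>b\<in>Basis. (v \<bullet> b) * T (b # hs))" unfolding ys by (rule multilinear_basis_expansion[OF Suc.prems hs])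
    then have "\<bar>T ys\<bar> = \<bar>\<Sum>b\<in>Basis. (v \<bullet> b) * T (b # hs)\<bar>" by (rule arg_cong)
    also have "\<dots> \<le> (\<Sum>b\<in>Basis. \<bar>(v \<bullet> b) * T (b # hs)\<bar>)" by (rule sum_abs)
    also have "\<dots> \<le> (\<Sum>b\<in>Basis. norm v * (C b * prod_list (map norm hs)))"
    proof (rule sum_mono)
      fix b :: 'a assume b: "b \<in> Basis"
      have "\<bar>v \<bullet> b\<bar> \<le> norm v" using Basis_le_norm[OF b] .
      then show "\<bar>(v \<bullet> b) * T (b # hs)\<bar> \<le> norm v * (C b * prod_list (map norm hs))"
        unfolding abs_mult by (intro mult_mono C(2)[OF hs]) auto
    qed
    also have "\<dots> = (\<Sum>b\<in>Basis. C b * (norm v * prod_list (map norm hs)))"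
      by (rule sum.cong) auto
    also have "\<dots> = (\<Sum>b\<in>Basis. C b) * prod_list (map norm ys)"
      using ys by (subst sum_distrib_right) simp
    finally show "\<bar>T ys\<bar> \<le> (\<Sum>b\<in>Basis. C b) * prod_list (map norm ys)" .
  qed
qed

lemma multilinear_scaleR_args:
  fixes T :: "'a::real_vector list \<Rightarrow> real"
  assumes "multilinear k T" "length ys = k" "length cs = k"
  shows "T (map2 (\<lambda>c y. c *\<^sub>R y) cs ys) = prod_list cs * T ys"
  using assms
proof (induction ys arbitrary: k T cs)
  case Nil then show ?case by simp
next
  case (Cons y ys)
  then obtain k' c cs' where k: "k = Suc k'" and cs: "cs = c # cs'" and l: "length ys = k'" "length cs' = k'"
    by (cases cs) auto
  have m: "multilinear (Suc k') T" using Cons.prems k by simp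
  have lin: "linear (\<lambda>v. T (v # map2 (\<lambda>c y. c *\<^sub>R y) cs' ys))"
    by (rule multilinear_linear_head[OF m]) (simp add: l)
  have "T (map2 (\<lambda>c y. c *\<^sub>R y) cs (y # ys)) = T ((c *\<^sub>R y) # map2 (\<lambda>c y. c *\<^sub>R y) cs' ys)"
    by (simp add: cs)
  also have "\<dots> = c * T (y # map2 (\<lambda>c y. c *\<^sub>R y) cs' ys)"
    by (rule linear_scaleR_real_valued[OF lin])
  also have "T (y # map2 (\<lambda>c y. c *\<^sub>R y) cs' ys) = prod_list cs' * T (y # ys)"
    using Cons.IH[OF multilinear_Cons[OF m] l(1) l(2)] by simp
  finally show ?case by (simp add: cs)
qed

lemma multilinear_zero_arg:
  fixes T :: "'a::real_vector list \<Rightarrow> real"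
  assumes "multilinear k T" "length ys = k" "0 \<in> set ys"
  shows "T ys = 0"
proof -
  obtain pre post where ys: "ys = pre @ 0 # post" using split_list[OF assms(3)] by blast
  have "linear (\<lambda>v. T (pre @ v # post))" using assms(1,2) ys unfolding multilinear_def by simp
  from linear_0[OF this] show ?thesis using ys by simp
qed

lemma multilinear_diff:
  assumes "multilinear k A" "multilinear k B" shows "multilinear k (\<lambda>ys. A ys - B ys)"
  unfolding multilinear_def
proof (intro allI impI)
  fix pre post :: "'a list" assume l: "length pre + length post + 1 = k"
  have a: "linear (\<lambda>v. A (pre @ v # post))" and b: "linear (\<lambda>v. B (pre @ v # post))"
    using assms l unfolding multilinear_def by blast+
  show "linear (\<lambda>v. A (pre @ v # post) - B (pre @ v # post))"
    by (rule linearI) (simp_all add: linear_add[OF a] linear_add[OF b] linear_scaleR_real_valued[OF a] linear_scaleR_real_valued[OF b] algebra_simps)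
qed

lemma multilinear_replicate_has_derivative:
  fixes T :: "'a::real_vector list \<Rightarrow> real"
  shows "multilinear k T \<Longrightarrow> ((\<lambda>t. T (replicate k (r + t *\<^sub>R d))) has_real_derivative
     (\<Sum>j<k. T (replicate j r @ d # replicate (k - 1 - j) r))) (at 0)"
proof (induction k arbitrary: T)
  case 0
  then show ?case by simp
next
  case (Suc k)
  have lin: "linear (\<lambda>v. T (v # replicate k (r + t *\<^sub>R d)))" for t
    by (rule multilinear_linear_head[OF Suc.prems]) simp
  have split: "T (replicate (Suc k) (r + t *\<^sub>R d))
      = T (r # replicate k (r + t *\<^sub>R d)) + t * T (d # replicate k (r + t *\<^sub>R d))" for t
    using linear_add[OF lin[of t], of r "t *\<^sub>R d"] linear_scaleR_real_valued[OF lin[of t], of t d] by simp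
  have d1: "((\<lambda>t. T (r # replicate k (r + t *\<^sub>R d))) has_real_derivative
      (\<Sum>j<k. T (r # replicate j r @ d # replicate (k - 1 - j) r))) (at 0)"
    using Suc.IH[OF multilinear_Cons[OF Suc.prems, of r]] by simp
  obtain S where "((\<lambda>t. T (d # replicate k (r + t *\<^sub>R d))) has_real_derivative S) (at 0)"
    using Suc.IH[OF multilinear_Cons[OF Suc.prems, of d]] by blast
  from DERIV_add[OF d1 DERIV_mult[OF DERIV_ident this]]
  have "((\<lambda>t. T (replicate (Suc k) (r + t *\<^sub>R d))) has_real_derivative
      (\<Sum>j<k. T (r # replicate j r @ d # replicate (k - 1 - j) r)) + T (d # replicate k r)) (at 0)"
    unfolding split by simp
  moreover have "(\<Sum>j<Suc k. T (replicate j r @ d # replicate (Suc k - 1 - j) r))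
      = T (d # replicate k r) + (\<Sum>j<k. T (r # replicate j r @ d # replicate (k - 1 - j) r))"
    by (subst sum.lessThan_Suc_shift) simp
  ultimately show ?case by (simp add: add.commute)
qed

section \<open>General norms and the dual norm of a form\<close>

lemma is_normD:
  assumes "is_norm N"
  shows "N x \<ge> 0" "N x = 0 \<longleftrightarrow> x = 0" "N (c *\<^sub>R x) = \<bar>c\<bar> * N x" "N (x + y) \<le> N x + N y"
  using assms unfolding is_norm_def by auto

lemma is_norm_minus: "is_norm N \<Longrightarrow> N (- x) = N x"
  using is_normD(3)[of N "-1" x] by simp

lemma is_norm_diff_le: "is_norm N \<Longrightarrow> N x - N y \<le> N (x - y)"
  using is_normD(4)[of N "x - y" y] by simp

lemma is_norm_sum: assumes "is_norm N" "finite S" shows "N (\<Sum>b\<in>S. g b) \<le> (\<Sum>b\<in>S. N (g b))"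
  using assms(2)
proof (induction S rule: finite_induct)
  case empty then show ?case using is_normD(2)[OF assms(1), of 0] by simp
next
  case (insert a S)
  then show ?case using is_normD(4)[OF assms(1), of "g a" "sum g S"] by simp
qed

lemma is_norm_le_norm:
  fixes N :: "'a::euclidean_space \<Rightarrow> real"
  assumes "is_norm N"
  shows "N x \<le> (\<Sum>b\<in>Basis. N b) * norm x"
proof -
  have "N x = N (\<Sum>b\<in>Basis. (x \<bullet> b) *\<^sub>R b)" by (simp add: euclidean_representation)
  also have "\<dots> \<le> (\<Sum>b\<in>Basis. N ((x \<bullet> b) *\<^sub>R b))" by (rule is_norm_sum[OF assms]) simp
  also have "\<dots> = (\<Sum>b\<in>Basis. \<bar>x \<bullet> b\<bar> * N b)" using is_normD(3)[OF assms] by simp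
  also have "\<dots> \<le> (\<Sum>b\<in>Basis. norm x * N b)"
    by (intro sum_mono mult_right_mono Basis_le_norm is_normD(1)[OF assms])
  also have "\<dots> = (\<Sum>b\<in>Basis. N b) * norm x" by (subst sum_distrib_right) (simp add: mult.commute)
  finally show ?thesis .
qed

lemma is_norm_continuous:
  fixes N :: "'a::euclidean_space \<Rightarrow> real"
  assumes N: "is_norm N"
  shows "continuous_on UNIV N"
proof (rule lipschitz_on_continuous_on, rule lipschitz_onI)
  fix x y :: 'a
  have "\<bar>N x - N y\<bar> \<le> N (x - y)"
    using is_norm_diff_le[OF N, of x y] is_norm_diff_le[OF N, of y x] is_norm_minus[OF N, of "x - y"]
    by (simp add: abs_le_iff)
  also have "\<dots> \<le> (\<Sum>b\<in>Basis. N b) * norm (x - y)"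
    by (rule is_norm_le_norm[OF N])
  finally show "dist (N x) (N y) \<le> (\<Sum>b\<in>Basis. N b) * dist x y"
    by (simp add: dist_real_def dist_norm)
qed (simp add: sum_nonneg is_normD(1)[OF N])

lemma is_norm_ge_norm:
  fixes N :: "'a::euclidean_space \<Rightarrow> real"
  assumes N: "is_norm N"
  shows "\<exists>c>0. \<forall>x. c * norm x \<le> N x"
proof -
  obtain b :: 'a where "b \<in> Basis" using nonempty_Basis by blast
  then have "sphere (0::'a) 1 \<noteq> {}" by force
  then obtain y0 where y0: "y0 \<in> sphere 0 1" "\<And>y. y \<in> sphere 0 1 \<Longrightarrow> N y0 \<le> N y"
    using continuous_attains_inf[OF compact_sphere _ continuous_on_subset[OF is_norm_continuous[OF N]]]
    by blast
  have "N y0 > 0" using y0(1) is_normD(1,2)[OF N, of y0] by (auto simp: less_le)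
  moreover have "N y0 * norm x \<le> N x" for x
  proof (cases "x = 0")
    case False
    have "N y0 \<le> N ((1 / norm x) *\<^sub>R x)" using y0(2) False by simp
    also have "\<dots> = N x / norm x" using is_normD(3)[OF N] by simp
    finally show ?thesis using False by (simp add: field_simps)
  qed (simp add: is_normD[OF N])
  ultimately show ?thesis by blast
qed

lemma prod_list_le_power:
  fixes f :: "'b \<Rightarrow> real"
  assumes "\<And>y. y \<in> set ys \<Longrightarrow> 0 \<le> f y \<and> f y \<le> B"
  shows "prod_list (map f ys) \<le> B ^ length ys"
  using assms
proof (induction ys)
  case (Cons y ys)
  then have "0 \<le> prod_list (map f ys)" by (intro prod_list_nonneg) auto
  moreover have "0 \<le> f y" "f y \<le> B" "prod_list (map f ys) \<le> B ^ length ys"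
    using Cons by auto
  ultimately show ?case by (simp add: mult_mono)
qed simp

lemma map2_scaleR_normalize:
  assumes "\<And>y. y \<in> set ys \<Longrightarrow> (N::'a::real_vector \<Rightarrow> real) y \<noteq> 0"
  shows "map2 (\<lambda>c y. c *\<^sub>R y) (map N ys) (map (\<lambda>y. (1 / N y) *\<^sub>R y) ys) = ys"
  using assms by (induction ys) auto

lemma form_dual_norm_bdd_above:
  fixes N :: "'a::euclidean_space \<Rightarrow> real" and T :: "'a list \<Rightarrow> real"
  assumes N: "is_norm N" and T: "multilinear k T"
  shows "bdd_above {T ys | ys. length ys = k \<and> (\<forall>y\<in>set ys. N y \<le> 1)}"
proof -
  obtain C where C: "C \<ge> 0" "\<And>ys. length ys = k \<Longrightarrow> \<bar>T ys\<bar> \<le> C * prod_list (map norm ys)"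
    using multilinear_bounded[OF T] by blast
  obtain c where c: "c > 0" "\<And>x. c * norm x \<le> N x" using is_norm_ge_norm[OF N] by blast
  show ?thesis
  proof (rule bdd_aboveI)
    fix s assume "s \<in> {T ys | ys. length ys = k \<and> (\<forall>y\<in>set ys. N y \<le> 1)}"
    then obtain zs where s: "s = T zs" and zs: "length zs = k" "\<forall>y\<in>set zs. N y \<le> 1" by blast
    have "prod_list (map norm zs) \<le> (1 / c) ^ length zs"
    proof (rule prod_list_le_power)
      fix y assume "y \<in> set zs"
      then have "c * norm y \<le> 1" using zs(2) c(2)[of y] by force
      then show "0 \<le> norm y \<and> norm y \<le> 1 / c" using c(1) by (simp add: field_simps)
    qed
    then have "C * prod_list (map norm zs) \<le> C * (1 / c) ^ k"
      using C(1) zs(1) by (intro mult_left_mono) auto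
    then show "s \<le> C * (1 / c) ^ k"
      using C(2)[OF zs(1)] s by linarith
  qed
qed

lemma form_dual_norm_upper:
  fixes N :: "'a::euclidean_space \<Rightarrow> real" and T :: "'a list \<Rightarrow> real"
  assumes N: "is_norm N" and T: "multilinear k T" and ys: "length ys = k"
  shows "T ys \<le> form_dual_norm N k T * prod_list (map N ys)"
proof (cases "\<forall>y\<in>set ys. N y \<noteq> 0")
  case True
  define ys' where "ys' = map (\<lambda>y. (1 / N y) *\<^sub>R y) ys"
  have "T ys' \<in> {T ys | ys. length ys = k \<and> (\<forall>y\<in>set ys. N y \<le> 1)}"
  proof (intro CollectI exI conjI ballI)
    fix y assume "y \<in> set ys'"
    then obtain z where "z \<in> set ys" "y = (1 / N z) *\<^sub>R z" unfolding ys'_def by auto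
    then show "N y \<le> 1" using True is_normD(1,3)[OF N] by simp
  qed (use ys in \<open>simp_all add: ys'_def\<close>)
  then have "T ys' \<le> form_dual_norm N k T"
    unfolding form_dual_norm_def by (rule cSup_upper[OF _ form_dual_norm_bdd_above[OF N T]])
  moreover have "T ys = prod_list (map N ys) * T ys'"
  proof -
    have "T ys = T (map2 (\<lambda>c y. c *\<^sub>R y) (map N ys) ys')"
      unfolding ys'_def using map2_scaleR_normalize[of ys N] True by simp
    also have "\<dots> = prod_list (map N ys) * T ys'"
      by (rule multilinear_scaleR_args[OF T]) (use ys in \<open>simp_all add: ys'_def\<close>)
    finally show ?thesis .
  qed
  moreover have "prod_list (map N ys) \<ge> 0"
    using is_normD(1)[OF N] by (intro prod_list_nonneg) auto
  ultimately show ?thesis by (metis mult.commute mult_right_mono)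
next
  case False
  then obtain y where y: "y \<in> set ys" "N y = 0" by blast
  then have "T ys = 0" using multilinear_zero_arg[OF T ys] is_normD(2)[OF N] by simp
  moreover have "prod_list (map N ys) = 0" using y by (induction ys) auto
  ultimately show ?thesis by simp
qed

lemma form_dual_norm_abs:
  fixes N :: "'a::euclidean_space \<Rightarrow> real" and T :: "'a list \<Rightarrow> real"
  assumes N: "is_norm N" and T: "multilinear (Suc k) T" and ys: "length ys = Suc k"
  shows "\<bar>T ys\<bar> \<le> form_dual_norm N (Suc k) T * prod_list (map N ys)"
proof -
  obtain y hs where yhs: "ys = y # hs" and hs: "length hs = k" using ys by (cases ys) auto
  have lin: "linear (\<lambda>v. T (v # hs))" by (rule multilinear_linear_head[OF T hs])
  have "- T ys = T ((-1) *\<^sub>R y # hs)" using linear_scaleR_real_valued[OF lin, of "-1" y] yhs by simp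
  also have "\<dots> \<le> form_dual_norm N (Suc k) T * prod_list (map N ((-1) *\<^sub>R y # hs))"
    by (rule form_dual_norm_upper[OF N T]) (simp add: hs)
  also have "\<dots> = form_dual_norm N (Suc k) T * prod_list (map N ys)"
    using is_norm_minus[OF N, of y] yhs by simp
  finally have "- T ys \<le> form_dual_norm N (Suc k) T * prod_list (map N ys)" .
  moreover have "T ys \<le> form_dual_norm N (Suc k) T * prod_list (map N ys)" by (rule form_dual_norm_upper[OF N T ys])
  ultimately show ?thesis by (simp add: abs_le_iff)
qed

section \<open>Derivatives along lines and symmetry of second derivatives\<close>

lemma has_real_derivative_along_line:
  fixes f :: "'a::real_normed_vector \<Rightarrow> real"
  assumes "(f has_derivative f') (at (x + t *\<^sub>R d))"
  shows "((\<lambda>s. f (x + s *\<^sub>R d)) has_real_derivative f' d) (at t)"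
proof -
  have "((\<lambda>s. x + s *\<^sub>R d) has_derivative (\<lambda>h. h *\<^sub>R d)) (at t)"
    by (auto intro!: derivative_eq_intros)
  from has_derivative_compose[OF this assms]
  have "((\<lambda>s. f (x + s *\<^sub>R d)) has_derivative (\<lambda>h. f' (h *\<^sub>R d))) (at t)" .
  moreover have "(\<lambda>h. f' (h *\<^sub>R d)) = (*) (f' d)"
    using linear_scaleR_real_valued[OF has_derivative_linear[OF assms]] by (auto simp: mult.commute)
  ultimately show ?thesis unfolding has_field_derivative_def by simp
qed

lemma has_real_derivative_le_of_increments:
  fixes \<phi> R :: "real \<Rightarrow> real"
  assumes der: "(\<phi> has_real_derivative \<phi>') (at 0)" and lim: "(R \<longlongrightarrow> R0) (at_right 0)"
    and incr: "\<And>t. 0 < t \<Longrightarrow> t < 1 \<Longrightarrow> \<phi> t - \<phi> 0 \<le> t * R t"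
  shows "\<phi>' \<le> R0"
proof -
  have "((\<lambda>t. (\<phi> t - \<phi> 0) / (t - 0)) \<longlongrightarrow> \<phi>') (at 0)"
    using der unfolding has_field_derivative_iff .
  then have "((\<lambda>t. (\<phi> t - \<phi> 0) / t) \<longlongrightarrow> \<phi>') (at 0)"
    by simp
  then have quot: "((\<lambda>t. (\<phi> t - \<phi> 0) / t) \<longlongrightarrow> \<phi>') (at_right 0)"
    by (rule tendsto_mono[OF at_le, rotated]) simp
  have "(\<phi> t - \<phi> 0) / t \<le> R t" if "0 < t" "t < 1" for t
    using incr[OF that] that by (simp add: divide_le_eq mult.commute)
  then have "eventually (\<lambda>t. (\<phi> t - \<phi> 0) / t \<le> R t) (at_right 0)"
    unfolding eventually_at_right[OF zero_less_one] by (intro exI[of _ 1]) auto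
  from tendsto_le[OF trivial_limit_at_right_real lim quot this] show ?thesis .
qed

lemma second_difference_mean_value:
  fixes f :: "'a::real_normed_vector \<Rightarrow> real"
  assumes d1: "\<And>z. (f has_derivative f' z) (at z)" and s: "s > 0"
  obtains \<theta> where "0 < \<theta>" "\<theta> < s"
    "f (x + s *\<^sub>R u + s *\<^sub>R v) - f (x + s *\<^sub>R u) - f (x + s *\<^sub>R v) + f x
      = s * (f' (x + s *\<^sub>R u + \<theta> *\<^sub>R v) v - f' (x + \<theta> *\<^sub>R v) v)"
proof -
  define G where "G = (\<lambda>t. f (x + s *\<^sub>R u + t *\<^sub>R v) - f (x + t *\<^sub>R v))"
  have "DERIV G t :> f' (x + s *\<^sub>R u + t *\<^sub>R v) v - f' (x + t *\<^sub>R v) v" for t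
    unfolding G_def by (intro DERIV_diff has_real_derivative_along_line d1)
  then obtain \<theta> where \<theta>: "0 < \<theta>" "\<theta> < s"
    and mv: "G s - G 0 = (s - 0) * (f' (x + s *\<^sub>R u + \<theta> *\<^sub>R v) v - f' (x + \<theta> *\<^sub>R v) v)"
    using MVT2[of 0 s G "\<lambda>t. f' (x + s *\<^sub>R u + t *\<^sub>R v) v - f' (x + t *\<^sub>R v) v"] s by auto
  have "G s - G 0 = f (x + s *\<^sub>R u + s *\<^sub>R v) - f (x + s *\<^sub>R u) - f (x + s *\<^sub>R v) + f x"
    unfolding G_def by simp
  with \<theta> mv show ?thesis by (intro that[of \<theta>]) auto
qed

lemma second_difference_error:
  fixes f :: "'a::real_normed_vector \<Rightarrow> real" and f' f'' :: "'a \<Rightarrow> 'a \<Rightarrow> real"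
  assumes d1: "\<And>z. (f has_derivative f' z) (at z)" and lin: "linear (\<lambda>w. f'' w v)"
    and approx: "\<And>y. norm (y - x) \<le> s * norm u + s * norm v \<Longrightarrow>
      \<bar>f' y v - f' x v - f'' (y - x) v\<bar> \<le> e * norm (y - x)"
    and s: "s > 0" and e: "e \<ge> 0"
  shows "\<bar>(f (x + s *\<^sub>R u + s *\<^sub>R v) - f (x + s *\<^sub>R u) - f (x + s *\<^sub>R v) + f x) - s\<^sup>2 * f'' u v\<bar>
    \<le> e * s\<^sup>2 * (norm u + 2 * norm v)"
proof -
  obtain \<theta> where \<theta>: "0 < \<theta>" "\<theta> < s"
    and mv: "f (x + s *\<^sub>R u + s *\<^sub>R v) - f (x + s *\<^sub>R u) - f (x + s *\<^sub>R v) + f x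
      = s * (f' (x + s *\<^sub>R u + \<theta> *\<^sub>R v) v - f' (x + \<theta> *\<^sub>R v) v)"
    using second_difference_mean_value[OF d1 s, of x u v] by blast
  have \<theta>v: "\<theta> * norm v \<le> s * norm v" using \<theta> by (intro mult_right_mono) auto
  have n1: "norm (s *\<^sub>R u + \<theta> *\<^sub>R v) \<le> s * norm u + s * norm v"
    using norm_triangle_ineq[of "s *\<^sub>R u" "\<theta> *\<^sub>R v"] s \<theta> \<theta>v by simp
  have n2: "norm (\<theta> *\<^sub>R v) \<le> s * norm v"
    using \<theta> \<theta>v by simp
  have "\<bar>f' (x + s *\<^sub>R u + \<theta> *\<^sub>R v) v - f' x v - f'' (s *\<^sub>R u + \<theta> *\<^sub>R v) v\<bar>
      \<le> e * norm (s *\<^sub>R u + \<theta> *\<^sub>R v)"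
    using approx[of "x + s *\<^sub>R u + \<theta> *\<^sub>R v"] n1 by (simp add: add.assoc)
  also have "\<dots> \<le> e * (s * norm u + s * norm v)"
    using n1 e by (intro mult_left_mono) auto
  finally have e1: "\<bar>f' (x + s *\<^sub>R u + \<theta> *\<^sub>R v) v - f' x v - f'' (s *\<^sub>R u + \<theta> *\<^sub>R v) v\<bar>
      \<le> e * (s * norm u + s * norm v)" .
  have "0 \<le> s * norm u" using s by simp
  then have "\<bar>f' (x + \<theta> *\<^sub>R v) v - f' x v - f'' (\<theta> *\<^sub>R v) v\<bar> \<le> e * norm (\<theta> *\<^sub>R v)"
    using approx[of "x + \<theta> *\<^sub>R v"] n2 by simp
  also have "\<dots> \<le> e * (s * norm v)"
    using n2 e by (intro mult_left_mono) auto
  finally have e2: "\<bar>f' (x + \<theta> *\<^sub>R v) v - f' x v - f'' (\<theta> *\<^sub>R v) v\<bar> \<le> e * (s * norm v)" .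
  have "f'' (s *\<^sub>R u + \<theta> *\<^sub>R v) v - f'' (\<theta> *\<^sub>R v) v = s * f'' u v"
    using linear_add[OF lin] linear_scaleR_real_valued[OF lin] by simp
  moreover have "e * (s * norm u + s * norm v) + e * (s * norm v) = e * (s * (norm u + 2 * norm v))"
    by (simp add: algebra_simps)
  ultimately have "\<bar>(f' (x + s *\<^sub>R u + \<theta> *\<^sub>R v) v - f' (x + \<theta> *\<^sub>R v) v) - s * f'' u v\<bar>
      \<le> e * (s * (norm u + 2 * norm v))"
    using e1 e2 by linarith
  then have "s * \<bar>(f' (x + s *\<^sub>R u + \<theta> *\<^sub>R v) v - f' (x + \<theta> *\<^sub>R v) v) - s * f'' u v\<bar>
      \<le> e * s\<^sup>2 * (norm u + 2 * norm v)"
    using mult_left_mono[of _ _ s] s by (fastforce simp: power2_eq_square)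
  moreover have "s * ((f' (x + s *\<^sub>R u + \<theta> *\<^sub>R v) v - f' (x + \<theta> *\<^sub>R v) v) - s * f'' u v)
      = (f (x + s *\<^sub>R u + s *\<^sub>R v) - f (x + s *\<^sub>R u) - f (x + s *\<^sub>R v) + f x) - s\<^sup>2 * f'' u v"
    unfolding mv by (simp add: power2_eq_square right_diff_distrib)
  ultimately show ?thesis
    using s by (metis abs_mult abs_of_pos)
qed

lemma second_difference_approx:
  fixes f :: "'a::real_normed_vector \<Rightarrow> real" and f' f'' :: "'a \<Rightarrow> 'a \<Rightarrow> real"
  assumes d1: "\<And>z. (f has_derivative f' z) (at z)"
    and d2: "((\<lambda>z. f' z v) has_derivative (\<lambda>w. f'' w v)) (at x)"
    and e: "e > 0"
  shows "\<exists>d>0. \<forall>s. 0 < s \<and> s < d \<longrightarrow>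
     \<bar>(f (x + s *\<^sub>R u + s *\<^sub>R v) - f (x + s *\<^sub>R u) - f (x + s *\<^sub>R v) + f x) - s\<^sup>2 * f'' u v\<bar>
       \<le> e * s\<^sup>2 * (norm u + 2 * norm v)"
proof -
  from d2[unfolded has_derivative_at_alt] e obtain d0 where d0: "d0 > 0"
    "\<And>y. norm (y - x) < d0 \<Longrightarrow> norm (f' y v - f' x v - f'' (y - x) v) \<le> e * norm (y - x)"
    by blast
  define d where "d = d0 / (norm u + norm v + 1)"
  show ?thesis
  proof (intro exI[of _ d] conjI allI impI)
    show "d > 0" unfolding d_def using d0 by (simp add: add_nonneg_pos)
    fix s :: real assume s: "0 < s \<and> s < d"
    then have "s * (norm u + norm v + 1) < d0"
      using pos_less_divide_eq[of "norm u + norm v + 1" s d0] unfolding d_def by (simp add: add_nonneg_pos)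
    then have "norm (y - x) < d0" if "norm (y - x) \<le> s * norm u + s * norm v" for y
      using that s by (simp add: algebra_simps)
    with d0(2) have "\<bar>f' y v - f' x v - f'' (y - x) v\<bar> \<le> e * norm (y - x)"
      if "norm (y - x) \<le> s * norm u + s * norm v" for y
      using that by fastforce
    then show "\<bar>(f (x + s *\<^sub>R u + s *\<^sub>R v) - f (x + s *\<^sub>R u) - f (x + s *\<^sub>R v) + f x) - s\<^sup>2 * f'' u v\<bar>
        \<le> e * s\<^sup>2 * (norm u + 2 * norm v)"
      using second_difference_error[where f'' = f'' and v = v, OF d1 has_derivative_linear[OF d2]] s e by simp
  qed
qed

lemma second_derivative_symmetric:
  fixes f :: "'a::real_normed_vector \<Rightarrow> real" and f' f'' :: "'a \<Rightarrow> 'a \<Rightarrow> real"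
  assumes d1: "\<And>z. (f has_derivative f' z) (at z)"
    and d2: "\<And>v. ((\<lambda>z. f' z v) has_derivative (\<lambda>w. f'' w v)) (at x)"
  shows "f'' u v = f'' v u"
proof -
  define C where "C = norm u + 2 * norm v + (norm v + 2 * norm u)"
  have C0: "C \<ge> 0" unfolding C_def by simp
  have "\<bar>f'' u v - f'' v u\<bar> \<le> 0 + e" if e: "e > 0" for e
  proof -
    define e' where "e' = e / (C + 1)"
    have e'0: "e' > 0" unfolding e'_def using e C0 by simp
    obtain da where da: "da > 0" "\<And>s. 0 < s \<and> s < da \<Longrightarrow>
       \<bar>(f (x + s *\<^sub>R u + s *\<^sub>R v) - f (x + s *\<^sub>R u) - f (x + s *\<^sub>R v) + f x) - s\<^sup>2 * f'' u v\<bar>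
       \<le> e' * s\<^sup>2 * (norm u + 2 * norm v)"
      using second_difference_approx[OF d1 d2 e'0, where u=u and v=v] by blast
    obtain db where db: "db > 0" "\<And>s. 0 < s \<and> s < db \<Longrightarrow>
       \<bar>(f (x + s *\<^sub>R v + s *\<^sub>R u) - f (x + s *\<^sub>R v) - f (x + s *\<^sub>R u) + f x) - s\<^sup>2 * f'' v u\<bar>
       \<le> e' * s\<^sup>2 * (norm v + 2 * norm u)"
      using second_difference_approx[OF d1 d2 e'0, where u=v and v=u] by blast
    define s where "s = min da db / 2"
    have s: "0 < s" "s < da" "s < db" unfolding s_def using da db by auto
    have sym: "f (x + s *\<^sub>R v + s *\<^sub>R u) = f (x + s *\<^sub>R u + s *\<^sub>R v)" by (simp add: add_ac)
    define \<Delta> where "\<Delta> = f (x + s *\<^sub>R u + s *\<^sub>R v) - f (x + s *\<^sub>R u) - f (x + s *\<^sub>R v) + f x"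
    have A: "\<bar>\<Delta> - s\<^sup>2 * f'' u v\<bar> \<le> e' * s\<^sup>2 * (norm u + 2 * norm v)" using da(2) s unfolding \<Delta>_def by blast
    have B: "\<bar>\<Delta> - s\<^sup>2 * f'' v u\<bar> \<le> e' * s\<^sup>2 * (norm v + 2 * norm u)" using db(2) s sym unfolding \<Delta>_def
      by (smt (verit))
    have "s\<^sup>2 * \<bar>f'' u v - f'' v u\<bar> = \<bar>(\<Delta> - s\<^sup>2 * f'' v u) - (\<Delta> - s\<^sup>2 * f'' u v)\<bar>"
    proof -
      have "(\<Delta> - s\<^sup>2 * f'' v u) - (\<Delta> - s\<^sup>2 * f'' u v) = s\<^sup>2 * (f'' u v - f'' v u)" by (simp add: algebra_simps)
      then show ?thesis by (simp add: abs_mult)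
    qed
    also have "\<dots> \<le> e' * s\<^sup>2 * (norm v + 2 * norm u) + e' * s\<^sup>2 * (norm u + 2 * norm v)"
      using A B by linarith
    also have "\<dots> = s\<^sup>2 * (e' * C)" unfolding C_def by (simp add: algebra_simps)
    finally have "\<bar>f'' u v - f'' v u\<bar> \<le> e' * C" using s(1) by simp
    also have "e' * C \<le> e" unfolding e'_def using e C0 by (simp add: field_simps)
    finally show ?thesis by simp
  qed
  then have "\<bar>f'' u v - f'' v u\<bar> \<le> 0" by (rule field_le_epsilon)
  then show ?thesis by simp
qed

section \<open>Higher derivatives and the Taylor model\<close>

lemma has_derivsD:
  assumes "has_derivs g D p" "i < p" "length hs = i"
  shows "((\<lambda>y. D i y hs) has_derivative (\<lambda>v. D (Suc i) x (v # hs))) (at x)"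
  using assms unfolding has_derivs_def by blast

lemma has_derivs_Suc_linear_combination:
  assumes hd: "has_derivs g D p" and k: "k < p" and len: "length pre + length post + 1 = k"
    and lin: "\<And>z. linear (\<lambda>v. D k z (pre @ v # post))"
  shows "D (Suc k) x (u # pre @ (a *\<^sub>R v + b *\<^sub>R w) # post)
    = a * D (Suc k) x (u # pre @ v # post) + b * D (Suc k) x (u # pre @ w # post)"
proof -
  have lens: "length (pre @ v # post) = k" for v using len by simp
  have eq: "(\<lambda>z. D k z (pre @ (a *\<^sub>R v + b *\<^sub>R w) # post))
      = (\<lambda>z. a * D k z (pre @ v # post) + b * D k z (pre @ w # post))"
    using linear_add[OF lin] linear_scaleR_real_valued[OF lin] by presburger
  have "((\<lambda>z. a * D k z (pre @ v # post) + b * D k z (pre @ w # post)) has_derivative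
      (\<lambda>u. a * D (Suc k) x (u # pre @ v # post) + b * D (Suc k) x (u # pre @ w # post))) (at x)"
    by (intro has_derivative_add has_derivative_mult_right has_derivsD[OF hd k lens])
  then have "(\<lambda>u. D (Suc k) x (u # pre @ (a *\<^sub>R v + b *\<^sub>R w) # post))
      = (\<lambda>u. a * D (Suc k) x (u # pre @ v # post) + b * D (Suc k) x (u # pre @ w # post))"
    by (intro has_derivative_unique[OF has_derivsD[OF hd k lens]]) (simp only: eq)
  then show ?thesis by metis
qed

lemma has_derivs_multilinear:
  assumes hd: "has_derivs g D p"
  shows "k \<le> p \<Longrightarrow> multilinear k (D k x)"
proof (induction k arbitrary: x)
  case 0
  then show ?case unfolding multilinear_def by simp
next
  case (Suc k)
  have kp: "k < p" using Suc.prems by simp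
  show ?case unfolding multilinear_def
  proof (intro allI impI)
    fix pre post :: "'a list" assume len: "length pre + length post + 1 = Suc k"
    show "linear (\<lambda>v. D (Suc k) x (pre @ v # post))"
    proof (cases pre)
      case Nil
      then have "length post = k" using len by simp
      from has_derivative_linear[OF has_derivsD[OF hd kp this, of x]] show ?thesis
        using Nil by simp
    next
      case (Cons u pre')
      have len': "length pre' + length post + 1 = k" using len Cons by simp
      have "linear (\<lambda>v. D k z (pre' @ v # post))" for z
        using Suc.IH kp len' unfolding multilinear_def by simp
      note comb = has_derivs_Suc_linear_combination[OF hd kp len' this, of x u]
      show ?thesis unfolding Cons
      proof (rule linearI)
        fix v w :: 'a
        show "D (Suc k) x ((u # pre') @ (v + w) # post)
            = D (Suc k) x ((u # pre') @ v # post) + D (Suc k) x ((u # pre') @ w # post)"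
          using comb[where a = 1 and b = 1 and v = v and w = w] by simp
        fix c :: real
        show "D (Suc k) x ((u # pre') @ (c *\<^sub>R v) # post) = c *\<^sub>R D (Suc k) x ((u # pre') @ v # post)"
          using comb[where a = c and b = 0 and v = v and w = v] by simp
      qed
    qed
  qed
qed

lemma has_derivs_swap:
  assumes hd: "has_derivs g D p"
  shows "length pre + length post + 2 = k \<Longrightarrow> k \<le> p \<Longrightarrow>
    D k y (pre @ u # v # post) = D k y (pre @ v # u # post)"
proof (induction pre arbitrary: k y)
  case Nil
  then obtain m where k: "k = Suc (Suc m)" and lp: "length post = m" by auto
  have mp: "m < p" "Suc m < p" using Nil.prems k by auto
  have d1: "\<And>z. ((\<lambda>z. D m z post) has_derivative (\<lambda>w. D (Suc m) z (w # post))) (at z)"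
    by (rule has_derivsD[OF hd mp(1) lp])
  have d2: "\<And>b. ((\<lambda>z. D (Suc m) z (b # post)) has_derivative (\<lambda>w. D (Suc (Suc m)) y (w # b # post))) (at y)"
    by (rule has_derivsD[OF hd mp(2)]) (simp add: lp)
  have "D (Suc (Suc m)) y (u # v # post) = D (Suc (Suc m)) y (v # u # post)"
    by (rule second_derivative_symmetric[where f="\<lambda>z. D m z post" and f'="\<lambda>z w. D (Suc m) z (w # post)"
          and f''="\<lambda>a b. D (Suc (Suc m)) y (a # b # post)", OF d1 d2])
  then show ?case using k by simp
next
  case (Cons p0 pre')
  then obtain k' where k: "k = Suc k'" and len: "length pre' + length post + 2 = k'" by auto
  have kp: "k' < p" "k' \<le> p" using Cons.prems k by auto
  have IH: "\<And>z. D k' z (pre' @ u # v # post) = D k' z (pre' @ v # u # post)"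
    using Cons.IH[OF len kp(2)] .
  have l1: "length (pre' @ u # v # post) = k'" "length (pre' @ v # u # post) = k'" using len by auto
  have a: "((\<lambda>z. D k' z (pre' @ u # v # post)) has_derivative (\<lambda>w. D (Suc k') y (w # pre' @ u # v # post))) (at y)"
    by (rule has_derivsD[OF hd kp(1) l1(1)])
  have b: "((\<lambda>z. D k' z (pre' @ u # v # post)) has_derivative (\<lambda>w. D (Suc k') y (w # pre' @ v # u # post))) (at y)"
    unfolding IH by (rule has_derivsD[OF hd kp(1) l1(2)])
  have "(\<lambda>w. D (Suc k') y (w # pre' @ u # v # post)) = (\<lambda>w. D (Suc k') y (w # pre' @ v # u # post))"
    by (rule has_derivative_unique[OF a b])
  then have "D (Suc k') y (p0 # pre' @ u # v # post) = D (Suc k') y (p0 # pre' @ v # u # post)" by metis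
  then show ?case using k by simp
qed

lemma has_derivs_move_last:
  assumes hd: "has_derivs g D p"
  shows "Suc (j + m) \<le> p \<Longrightarrow>
    D (Suc (j + m)) y (replicate j r @ d # replicate m r) = D (Suc (j + m)) y (replicate (j + m) r @ [d])"
proof (induction m arbitrary: j)
  case 0 then show ?case by simp
next
  case (Suc m)
  have "D (Suc (j + Suc m)) y (replicate j r @ d # r # replicate m r)
      = D (Suc (j + Suc m)) y (replicate j r @ r # d # replicate m r)"
    by (rule has_derivs_swap[OF hd]) (use Suc.prems in auto)
  also have "replicate j r @ r # d # replicate m r = replicate (Suc j) r @ d # replicate m r"
    by (simp add: replicate_app_Cons_same)
  also have "Suc (j + Suc m) = Suc (Suc j + m)" by simp
  also have "D (Suc (Suc j + m)) y (replicate (Suc j) r @ d # replicate m r) = D (Suc (Suc j + m)) y (replicate (Suc j + m) r @ [d])"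
    by (rule Suc.IH) (use Suc.prems in simp)
  finally show ?case by simp
qed

lemma taylor_term_has_derivative:
  assumes hd: "has_derivs g D p" and i: "i \<le> p"
  shows "((\<lambda>t. D i y (replicate i (r + t *\<^sub>R d))) has_real_derivative
    of_nat i * D i y (replicate (i - 1) r @ [d])) (at 0)"
proof -
  have "D i y (replicate j r @ d # replicate (i - 1 - j) r) = D i y (replicate (i - 1) r @ [d])"
    if j: "j < i" for j
    using has_derivs_move_last[OF hd, of j "i - 1 - j" y r d] j i by simp
  then have "(\<Sum>j<i. D i y (replicate j r @ d # replicate (i - 1 - j) r)) = of_nat i * D i y (replicate (i - 1) r @ [d])"
    by simp
  with multilinear_replicate_has_derivative[OF has_derivs_multilinear[OF hd i, of y], of r d]
  show ?thesis by simp
qed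

lemma taylor_model_has_derivative:
  fixes D :: "nat \<Rightarrow> 'a::euclidean_space \<Rightarrow> 'a list \<Rightarrow> real"
  assumes hd: "has_derivs g D p"
  shows "((\<lambda>t. taylor_model D p y (x + t *\<^sub>R d)) has_real_derivative
     (\<Sum>m<p. D (Suc m) y (replicate m (x - y) @ [d]) / fact m)) (at 0)"
proof -
  have "((\<lambda>t. \<Sum>i=0..p. D i y (replicate i (x - y + t *\<^sub>R d)) / fact i) has_real_derivative
      (\<Sum>i=0..p. of_nat i * D i y (replicate (i - 1) (x - y) @ [d]) / fact i)) (at 0)"
    by (rule DERIV_sum, rule DERIV_cdivide, rule taylor_term_has_derivative[OF hd]) simp
  moreover have "(\<Sum>i=0..p. of_nat i * D i y (replicate (i - 1) (x - y) @ [d]) / fact i)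
      = (\<Sum>m<p. D (Suc m) y (replicate m (x - y) @ [d]) / fact m)"
  proof (cases p)
    case (Suc p')
    have "(\<Sum>i=0..p. of_nat i * D i y (replicate (i - 1) (x - y) @ [d]) / fact i)
        = (\<Sum>m=0..p'. of_nat (Suc m) * D (Suc m) y (replicate m (x - y) @ [d]) / fact (Suc m))"
      unfolding Suc sum.atLeast0_atMost_Suc_shift by simp
    also have "\<dots> = (\<Sum>m=0..p'. D (Suc m) y (replicate m (x - y) @ [d]) / fact m)"
      by (rule sum.cong[OF refl]) (simp add: field_simps del: of_nat_Suc)
    finally show ?thesis
      unfolding Suc by (simp add: atLeast0AtMost lessThan_Suc_atMost)
  qed simp
  moreover have "taylor_model D p y (x + t *\<^sub>R d) = (\<Sum>i=0..p. D i y (replicate i (x - y + t *\<^sub>R d)) / fact i)" for t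
    unfolding taylor_model_def by (simp add: algebra_simps)
  ultimately show ?thesis by simp
qed

lemma holder_derivs_bound:
  fixes N :: "'a::euclidean_space \<Rightarrow> real"
  assumes N: "is_norm N" and hold: "holder_derivs g N D p \<nu> L" and p: "p \<ge> 1"
    and len: "length ys = p"
  shows "\<bar>D p x ys - D p y ys\<bar> \<le> fact (p - 1) * (L * N (x - y) powr \<nu>) * prod_list (map N ys)"
proof -
  have hd: "has_derivs g D p" using hold unfolding holder_derivs_def by blast
  have ml: "multilinear p (\<lambda>ys. D p x ys - D p y ys)" by (rule multilinear_diff; rule has_derivs_multilinear[OF hd]; simp)
  obtain p' where p': "p = Suc p'" using p by (cases p) auto
  have "\<bar>D p x ys - D p y ys\<bar> \<le> form_dual_norm N p (\<lambda>ys. D p x ys - D p y ys) * prod_list (map N ys)"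
    using form_dual_norm_abs[OF N, of p' "\<lambda>ys. D p x ys - D p y ys" ys] ml len p' by simp
  also have "\<dots> \<le> fact (p - 1) * (L * N (x - y) powr \<nu>) * prod_list (map N ys)"
  proof (rule mult_right_mono)
    have "form_dual_norm N p (\<lambda>ys. D p x ys - D p y ys) / fact (p - 1) \<le> L * N (x - y) powr \<nu>"
      using hold unfolding holder_derivs_def by blast
    then show "form_dual_norm N p (\<lambda>ys. D p x ys - D p y ys) \<le> fact (p - 1) * (L * N (x - y) powr \<nu>)"
      by (simp add: divide_le_eq mult.commute)
    show "0 \<le> prod_list (map N ys)" using is_normD(1)[OF N] by (induction ys) auto
  qed
  finally show ?thesis .
qed

text \<open>Maclaurin's formula for \<open>s \<mapsto> D 1 (y + s (x - y)) [d]\<close>, whose \<open>m\<close>-th derivative is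
  \<open>D (m + 1) (y + s (x - y)) [x - y, \<dots>, x - y, d]\<close>.\<close>

lemma gradient_taylor_expansion:
  assumes hd: "has_derivs g D p" and p: "p \<ge> 1"
  obtains c where "0 \<le> c" "c \<le> 1"
    "D 1 x [d] - (\<Sum>m<p. D (Suc m) y (replicate m (x - y) @ [d]) / fact m)
      = (D p (y + c *\<^sub>R (x - y)) (replicate (p - 1) (x - y) @ [d])
          - D p y (replicate (p - 1) (x - y) @ [d])) / fact (p - 1)"
proof -
  define r where "r = x - y"
  define dif where "dif = (\<lambda>m s. D (Suc m) (y + s *\<^sub>R r) (replicate m r @ [d]))"
  have split: "(\<Sum>m<p. dif m 0 / fact m) = (\<Sum>m<p - 1. dif m 0 / fact m) + dif (p - 1) 0 / fact (p - 1)"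
    using p by (cases p) auto
  have "\<exists>c. 0 \<le> c \<and> c \<le> 1 \<and> dif 0 1 = (\<Sum>m<p - 1. dif m 0 / fact m) + dif (p - 1) c / fact (p - 1)"
  proof (cases "p = 1")
    case True
    then show ?thesis by (intro exI[of _ 1]) simp
  next
    case False
    have "DERIV (dif m) t :> dif (Suc m) t" if "m < p - 1" for m t
    proof -
      have "Suc m < p" using that by linarith
      from has_real_derivative_along_line[OF has_derivsD[OF hd this, of "replicate m r @ [d]"]]
      show ?thesis unfolding dif_def by simp
    qed
    then obtain t where "0 < t" "t < 1"
      "dif 0 1 = (\<Sum>m<p - 1. dif m 0 / fact m * 1 ^ m) + dif (p - 1) t / fact (p - 1) * 1 ^ (p - 1)"
      using Maclaurin[of 1 "p - 1" dif "dif 0"] False p by auto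
    then show ?thesis by (intro exI[of _ t]) simp
  qed
  then obtain c where "0 \<le> c" "c \<le> 1"
    "dif 0 1 = (\<Sum>m<p - 1. dif m 0 / fact m) + dif (p - 1) c / fact (p - 1)"
    by blast
  moreover have "Suc (p - 1) = p" using p by simp
  ultimately show ?thesis
    using split that[of c] unfolding dif_def r_def by (simp add: diff_divide_distrib)
qed

lemma powr_scaled_mult_power_le:
  fixes c n \<nu> :: real
  assumes "0 \<le> c" "c \<le> 1" "0 \<le> n" "0 \<le> \<nu>" "p \<ge> 1"
  shows "(c * n) powr \<nu> * n ^ (p - 1) \<le> n powr (real p + \<nu> - 1)"
proof (cases "n = 0")
  case True
  then show ?thesis using assms by (cases "p = 1") auto
next
  case False
  then have n: "n > 0" using assms by simp
  have "(c * n) powr \<nu> * n ^ (p - 1) \<le> n powr \<nu> * n ^ (p - 1)"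
    using assms n by (intro mult_right_mono powr_mono2) (auto simp: mult_le_cancel_right1)
  also have "n powr \<nu> * n ^ (p - 1) = n powr (real p + \<nu> - 1)"
  proof -
    have "n ^ (p - 1) = n powr (real p - 1)"
      using n assms by (simp add: powr_realpow[symmetric] of_nat_diff)
    then show ?thesis using n by (simp add: powr_add[symmetric] algebra_simps)
  qed
  finally show ?thesis .
qed

lemma taylor_model_gradient_error:
  fixes N :: "'a::euclidean_space \<Rightarrow> real"
  assumes N: "is_norm N" and hold: "holder_derivs g N D p \<nu> L" and p: "p \<ge> 1"
    and nu: "0 \<le> \<nu>" and L: "L > 0"
  shows "\<bar>D 1 x [d] - (\<Sum>m<p. D (Suc m) y (replicate m (x - y) @ [d]) / fact m)\<bar>
     \<le> L * N (x - y) powr (real p + \<nu> - 1) * N d"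
proof -
  have hd: "has_derivs g D p" using hold unfolding holder_derivs_def by blast
  define r where "r = x - y"
  have Nr: "N r \<ge> 0" "N d \<ge> 0" using is_normD(1)[OF N] by auto
  obtain c where c: "0 \<le> c" "c \<le> 1"
    and eq: "D 1 x [d] - (\<Sum>m<p. D (Suc m) y (replicate m r @ [d]) / fact m)
      = (D p (y + c *\<^sub>R r) (replicate (p - 1) r @ [d]) - D p y (replicate (p - 1) r @ [d])) / fact (p - 1)"
    using gradient_taylor_expansion[OF hd p] unfolding r_def by blast
  have "\<bar>D p (y + c *\<^sub>R r) (replicate (p - 1) r @ [d]) - D p y (replicate (p - 1) r @ [d])\<bar>
      \<le> fact (p - 1) * (L * N (y + c *\<^sub>R r - y) powr \<nu>) * prod_list (map N (replicate (p - 1) r @ [d]))"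
    using holder_derivs_bound[OF N hold p, of "replicate (p - 1) r @ [d]" "y + c *\<^sub>R r" y] p by simp
  also have "\<dots> = fact (p - 1) * (L * ((c * N r) powr \<nu> * N r ^ (p - 1)) * N d)"
    using is_normD(3)[OF N, of c r] c by (simp add: algebra_simps)
  also have "\<dots> \<le> fact (p - 1) * (L * N r powr (real p + \<nu> - 1) * N d)"
    using powr_scaled_mult_power_le[OF c Nr(1) nu p] L Nr by (intro mult_right_mono mult_left_mono) auto
  finally show ?thesis
    unfolding r_def[symmetric] eq by (simp add: divide_le_eq mult.commute)
qed

section \<open>Convexity\<close>

lemma convex_gradient_inequality:
  fixes g :: "'a::real_normed_vector \<Rightarrow> real"
  assumes cvx: "convex_on UNIV g" and dg: "(g has_derivative g') (at x)"
  shows "g x + g' (y - x) \<le> g y"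
proof -
  have "g' (y - x) \<le> g y - g x"
  proof (rule has_real_derivative_le_of_increments)
    show "((\<lambda>t. g (x + t *\<^sub>R (y - x))) has_real_derivative g' (y - x)) (at 0)"
      using dg by (intro has_real_derivative_along_line) simp
    fix t :: real assume "0 < t" "t < 1"
    then show "g (x + t *\<^sub>R (y - x)) - g (x + 0 *\<^sub>R (y - x)) \<le> t * (g y - g x)"
      using convex_onD[OF cvx, of t x y] by (simp add: algebra_simps)
  qed simp
  then show ?thesis by simp
qed

lemma proper_closed_convexD:
  fixes l :: "'a::real_normed_vector \<Rightarrow> ereal"
  assumes l: "proper_closed_convex l" and x: "l x \<noteq> \<infinity>" and y: "l y \<noteq> \<infinity>" and t: "0 \<le> t" "t \<le> 1"
  shows "l ((1 - t) *\<^sub>R x + t *\<^sub>R y) \<noteq> \<infinity> \<and>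
    real_of_ereal (l ((1 - t) *\<^sub>R x + t *\<^sub>R y)) \<le> (1 - t) * real_of_ereal (l x) + t * real_of_ereal (l y)"
proof -
  define E where "E = {(x, t::real). l x \<le> ereal t}"
  have cE: "convex E" using l unfolding proper_closed_convex_def E_def by blast
  have nm: "\<And>z. l z \<noteq> -\<infinity>" using l unfolding proper_closed_convex_def by blast
  have ex: "l x = ereal (real_of_ereal (l x))" using x nm[of x] by (cases "l x") auto
  have ey: "l y = ereal (real_of_ereal (l y))" using y nm[of y] by (cases "l y") auto
  have "(x, real_of_ereal (l x)) \<in> E" "(y, real_of_ereal (l y)) \<in> E" unfolding E_def using ex ey by auto
  from convexD_alt[OF cE this t]
  have le: "l ((1 - t) *\<^sub>R x + t *\<^sub>R y) \<le> ereal ((1 - t) * real_of_ereal (l x) + t * real_of_ereal (l y))"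
    unfolding E_def by simp
  have "l ((1 - t) *\<^sub>R x + t *\<^sub>R y) \<noteq> \<infinity>" using le by auto
  moreover have "real_of_ereal (l ((1 - t) *\<^sub>R x + t *\<^sub>R y)) \<le> (1 - t) * real_of_ereal (l x) + t * real_of_ereal (l y)"
    using le nm[of "(1 - t) *\<^sub>R x + t *\<^sub>R y"] calculation by (cases "l ((1 - t) *\<^sub>R x + t *\<^sub>R y)") auto
  ultimately show ?thesis by blast
qed

lemma convex_strict_epigraph:
  assumes cvx: "convex_on UNIV \<phi>"
  shows "convex {z. \<phi> (fst z) < snd z}"
  unfolding convex_alt
proof (intro ballI allI impI CollectI)
  fix z1 z2 :: "'a \<times> real" and u :: real
  assume z: "z1 \<in> {z. \<phi> (fst z) < snd z}" "z2 \<in> {z. \<phi> (fst z) < snd z}" and u: "0 \<le> u \<and> u \<le> 1"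
  have "(1 - u) * \<phi> (fst z1) + u * \<phi> (fst z2) < (1 - u) * snd z1 + u * snd z2"
  proof (cases "u = 0")
    case False
    then have "u * \<phi> (fst z2) < u * snd z2" using z u by simp
    moreover have "(1 - u) * \<phi> (fst z1) \<le> (1 - u) * snd z1"
      using z u by (intro mult_left_mono) auto
    ultimately show ?thesis by linarith
  qed (use z in simp)
  moreover have "\<phi> ((1 - u) *\<^sub>R fst z1 + u *\<^sub>R fst z2) \<le> (1 - u) * \<phi> (fst z1) + u * \<phi> (fst z2)"
    using convex_onD[OF cvx, of u "fst z1" "fst z2"] u by simp
  ultimately show "\<phi> (fst ((1 - u) *\<^sub>R z1 + u *\<^sub>R z2)) < snd ((1 - u) *\<^sub>R z1 + u *\<^sub>R z2)"
    by simp
qed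

lemma convex_supporting_hyperplane:
  fixes \<phi> :: "'a::euclidean_space \<Rightarrow> real"
  assumes cvx: "convex_on UNIV \<phi>"
  shows "\<exists>a c. c < 0 \<and> (\<forall>y t. \<phi> y < t \<longrightarrow> inner a (y - w) + c * (t - \<phi> w) \<le> 0)"
proof -
  define E where "E = {z. \<phi> (fst z) < snd z}"
  have "(w, \<phi> w + 1) \<in> E" unfolding E_def by simp
  then have "E \<noteq> {}" by blast
  moreover have "E \<inter> {(w, \<phi> w)} = {}" unfolding E_def by simp
  ultimately have "\<exists>a' b. a' \<noteq> 0 \<and> (\<forall>z\<in>E. inner a' z \<le> b) \<and> (\<forall>z\<in>{(w, \<phi> w)}. b \<le> inner a' z)"
    by (intro separating_hyperplane_sets convex_strict_epigraph[OF cvx, folded E_def]) auto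
  then obtain a' b where a': "a' \<noteq> 0" "\<And>z. z \<in> E \<Longrightarrow> inner a' z \<le> b" "b \<le> inner a' (w, \<phi> w)"
    by blast
  obtain a c where ac: "a' = (a, c)" by (cases a')
  have sep: "inner a (y - w) + c * (t - \<phi> w) \<le> 0" if "\<phi> y < t" for y t
    using a'(2)[of "(y, t)"] a'(3) that unfolding ac E_def
    by (simp add: inner_diff_right algebra_simps)
  have c_neg: "c < 0"
  proof (rule ccontr)
    assume "\<not> c < 0"
    moreover have "c \<le> 0" using sep[of w "\<phi> w + 1"] by simp
    ultimately have "c = 0" by simp
    then have "a \<noteq> 0" using a'(1) ac by (auto simp: zero_prod_def)
    moreover have "inner a a \<le> 0" using sep[of "w + a" "\<phi> (w + a) + 1"] \<open>c = 0\<close> by simp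
    ultimately show False using inner_gt_zero_iff[of a] by linarith
  qed
  with sep show ?thesis by blast
qed

lemma subdiff_nonempty:
  fixes \<phi> :: "'a::euclidean_space \<Rightarrow> real"
  assumes cvx: "convex_on UNIV \<phi>"
  shows "\<exists>\<zeta>. \<zeta> \<in> subdiff \<phi> w"
proof -
  obtain a c where c: "c < 0" and sep: "\<forall>y t. \<phi> y < t \<longrightarrow> inner a (y - w) + c * (t - \<phi> w) \<le> 0"
    using convex_supporting_hyperplane[OF cvx, of w] by blast
  have "\<phi> w + inner ((- 1 / c) *\<^sub>R a) (y - w) \<le> \<phi> y" for y
  proof (rule field_le_epsilon)
    fix e :: real assume "e > 0"
    then have "inner a (y - w) + c * (\<phi> y + e - \<phi> w) \<le> 0" using sep by simp
    then show "\<phi> w + inner ((- 1 / c) *\<^sub>R a) (y - w) \<le> \<phi> y + e"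
      using c by (simp add: field_simps)
  qed
  then show ?thesis unfolding subdiff_def by (intro exI[of _ "(- 1 / c) *\<^sub>R a"]) simp
qed

lemma unif_convex_segment:
  fixes \<phi> :: "'a::euclidean_space \<Rightarrow> real"
  assumes N: "is_norm N" and cvx: "convex_on UNIV \<phi>" and uc: "unif_convex N s \<sigma> \<phi>"
    and t: "0 \<le> t" "t \<le> 1"
  shows "\<phi> (z + t *\<^sub>R (y - z)) + \<sigma> / s * (t * (1 - t) powr s + (1 - t) * t powr s) * N (y - z) powr s
     \<le> t * \<phi> y + (1 - t) * \<phi> z"
proof -
  define w where "w = z + t *\<^sub>R (y - z)"
  obtain \<zeta> where \<zeta>: "\<zeta> \<in> subdiff \<phi> w" using subdiff_nonempty[OF cvx] by blast
  have u1: "\<phi> y \<ge> \<phi> w + inner \<zeta> (y - w) + \<sigma> / s * N (y - w) powr s"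
    using uc \<zeta> unfolding unif_convex_def by blast
  have u2: "\<phi> z \<ge> \<phi> w + inner \<zeta> (z - w) + \<sigma> / s * N (z - w) powr s"
    using uc \<zeta> unfolding unif_convex_def by blast
  have yw: "y - w = (1 - t) *\<^sub>R (y - z)" unfolding w_def by (simp add: algebra_simps)
  have zw: "z - w = (- t) *\<^sub>R (y - z)" unfolding w_def by (simp add: algebra_simps)
  define I where "I = inner \<zeta> (y - z)"
  define P where "P = N (y - z) powr s"
  define K where "K = \<sigma> / s"
  have i1: "inner \<zeta> (y - w) = (1 - t) * I" unfolding yw I_def by simp
  have i2: "inner \<zeta> (z - w) = - t * I" unfolding zw I_def by simp
  have n1: "N (y - w) powr s = (1 - t) powr s * P"
    unfolding yw P_def using is_normD(3)[OF N, of "1 - t" "y - z"] t by (simp add: powr_mult)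
  have n2: "N (z - w) powr s = t powr s * P"
    unfolding zw P_def using is_normD(3)[OF N, of "- t" "y - z"] t by (simp add: powr_mult)
  have a: "t * (\<phi> w + (1 - t) * I + K * ((1 - t) powr s * P)) \<le> t * \<phi> y"
    using u1 i1 n1 t unfolding K_def by (intro mult_left_mono) auto
  have b: "(1 - t) * (\<phi> w + - t * I + K * (t powr s * P)) \<le> (1 - t) * \<phi> z"
    using u2 i2 n2 t unfolding K_def by (intro mult_left_mono) auto
  have "t * (\<phi> w + (1 - t) * I + K * ((1 - t) powr s * P)) + (1 - t) * (\<phi> w + - t * I + K * (t powr s * P))
      = \<phi> w + K * (t * (1 - t) powr s + (1 - t) * t powr s) * P"
    by (simp add: algebra_simps)
  then show ?thesis using a b unfolding w_def[symmetric] K_def P_def by linarith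
qed

lemma unif_convex_min_growth:
  fixes h \<phi> :: "'a::euclidean_space \<Rightarrow> real"
  assumes N: "is_norm N" and cvx: "convex_on UNIV h" and uc: "unif_convex N s \<sigma> h"
    and s: "s > 0" and \<sigma>: "\<sigma> \<ge> 0"
    and minw: "\<And>t. 0 < t \<Longrightarrow> t < 1 \<Longrightarrow> h z + \<phi> z \<le> h (z + t *\<^sub>R (y - z)) + \<phi> (z + t *\<^sub>R (y - z))"
    and cvxp: "\<And>t. 0 < t \<Longrightarrow> t < 1 \<Longrightarrow> \<phi> (z + t *\<^sub>R (y - z)) \<le> (1 - t) * \<phi> z + t * \<phi> y"
  shows "h z + \<phi> z + \<sigma> / s * N (y - z) powr s \<le> h y + \<phi> y"
proof -
  define P where "P = N (y - z) powr s"
  have P0: "P \<ge> 0" unfolding P_def by simp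
  have K0: "\<sigma> / s \<ge> 0" using s \<sigma> by simp
  have ev: "\<sigma> / s * ((1 - t) powr s) * P \<le> (h y + \<phi> y) - (h z + \<phi> z)" if t: "0 < t" "t < 1" for t
  proof -
    have seg: "h (z + t *\<^sub>R (y - z)) + \<sigma> / s * (t * (1 - t) powr s + (1 - t) * t powr s) * P \<le> t * h y + (1 - t) * h z"
      using unif_convex_segment[OF N cvx uc, of t z y] t unfolding P_def by simp
    have tt: "0 \<le> (1 - t) * t powr s" using t by simp
    have "0 \<le> \<sigma> / s * ((1 - t) * t powr s) * P" by (intro mult_nonneg_nonneg K0 P0 tt)
    then have "t * (\<sigma> / s * ((1 - t) powr s) * P) \<le> \<sigma> / s * (t * (1 - t) powr s + (1 - t) * t powr s) * P"
      by (simp add: algebra_simps)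
    moreover have "h z + \<phi> z \<le> h (z + t *\<^sub>R (y - z)) + \<phi> (z + t *\<^sub>R (y - z))" by (rule minw[OF t])
    moreover have "\<phi> (z + t *\<^sub>R (y - z)) \<le> (1 - t) * \<phi> z + t * \<phi> y" by (rule cvxp[OF t])
    ultimately have "t * (\<sigma> / s * ((1 - t) powr s) * P) \<le> t * ((h y + \<phi> y) - (h z + \<phi> z))"
      using seg by (simp add: algebra_simps)
    then show ?thesis using t(1) by (simp only: mult_le_cancel_left_pos)
  qed
  have lim: "((\<lambda>t. \<sigma> / s * ((1 - t) powr s) * P) \<longlongrightarrow> \<sigma> / s * ((1 - 0) powr s) * P) (at_right 0)"
    by (intro tendsto_intros) auto
  have "eventually (\<lambda>t. \<sigma> / s * ((1 - t) powr s) * P \<le> (h y + \<phi> y) - (h z + \<phi> z)) (at_right (0::real))"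
    unfolding eventually_at_right[OF zero_less_one] using ev by (intro exI[of _ 1]) auto
  from tendsto_upperbound[OF lim this] have "\<sigma> / s * ((1 - 0) powr s) * P \<le> (h y + \<phi> y) - (h z + \<phi> z)" by simp
  then show ?thesis unfolding P_def by simp
qed

lemma powr_convex_combination:
  fixes A B t q :: real
  assumes q: "q \<ge> 1" and AB: "A \<ge> 0" "B \<ge> 0" and t: "0 \<le> t" "t \<le> 1"
  shows "((1 - t) * A + t * B) powr q \<le> (1 - t) * A powr q + t * B powr q"
proof -
  have scaled: "(s * C) powr q \<le> s * C powr q" if "0 \<le> s" "s \<le> 1" "C \<ge> 0" for s C :: real
  proof -
    have "s powr q \<le> s" using that q powr_le_one_le[of s q] by (cases "s = 0") auto
    then show ?thesis using that by (simp add: powr_mult mult_right_mono)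
  qed
  consider "A = 0" | "B = 0" | "A > 0" "B > 0" using AB by linarith
  then show ?thesis
  proof cases
    case 1
    then show ?thesis using scaled[of t B] t AB by simp
  next
    case 2
    then show ?thesis using scaled[of "1 - t" A] t AB by simp
  next
    case 3
    then show ?thesis using convex_onD[OF powr_convex[OF q], of t A B] t by simp
  qed
qed

lemma convex_on_norm_powr:
  fixes N :: "'a::real_vector \<Rightarrow> real"
  assumes N: "is_norm N" and q: "q \<ge> 1"
  shows "convex_on UNIV (\<lambda>y. N y powr q / q)"
proof (intro convex_on_cdiv convex_onI)
  fix t :: real and x y :: 'a assume t: "0 < t" "t < 1"
  have "N ((1 - t) *\<^sub>R x + t *\<^sub>R y) \<le> (1 - t) * N x + t * N y"
    using is_normD(4)[OF N, of "(1 - t) *\<^sub>R x" "t *\<^sub>R y"] is_normD(3)[OF N, of "1 - t" x]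
      is_normD(3)[OF N, of t y] t by simp
  then have "N ((1 - t) *\<^sub>R x + t *\<^sub>R y) powr q \<le> ((1 - t) * N x + t * N y) powr q"
    using is_normD(1)[OF N] q by (intro powr_mono2) auto
  also have "\<dots> \<le> (1 - t) * N x powr q + t * N y powr q"
    using powr_convex_combination[OF q is_normD(1)[OF N] is_normD(1)[OF N]] t by simp
  finally show "N ((1 - t) *\<^sub>R x + t *\<^sub>R y) powr q \<le> (1 - t) * N x powr q + t * N y powr q" .
qed (use q in auto)

lemma norm_powr_segment:
  fixes N :: "'a::euclidean_space \<Rightarrow> real"
  assumes N: "is_norm N" and q: "q \<ge> 1" and \<beta>: "\<beta> \<ge> 0"
    and nq: "unif_convex N q \<beta> (\<lambda>y. N y powr q / q)" and t: "0 \<le> t" "t \<le> 1"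
  shows "N (r + t *\<^sub>R d) powr q - N r powr q
    \<le> t * (N (r + d) powr q - N r powr q - \<beta> * (1 - t) powr q * N d powr q)"
proof -
  define X where "X = t * (1 - t) powr q + (1 - t) * t powr q"
  have "N (r + t *\<^sub>R d) powr q / q + \<beta> / q * X * N d powr q
      \<le> t * (N (r + d) powr q / q) + (1 - t) * (N r powr q / q)"
    using unif_convex_segment[OF N convex_on_norm_powr[OF N q] nq t, of r "r + d"] unfolding X_def by simp
  then have "q * (N (r + t *\<^sub>R d) powr q / q + \<beta> / q * X * N d powr q)
      \<le> q * (t * (N (r + d) powr q / q) + (1 - t) * (N r powr q / q))"
    using q by (intro mult_left_mono) auto
  then have "N (r + t *\<^sub>R d) powr q + \<beta> * X * N d powr q \<le> t * N (r + d) powr q + (1 - t) * N r powr q"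
    using q by (simp add: distrib_left)
  moreover have "\<beta> * (t * (1 - t) powr q) * N d powr q \<le> \<beta> * X * N d powr q"
    unfolding X_def using t \<beta> by (intro mult_right_mono mult_left_mono) auto
  ultimately show ?thesis by (simp add: algebra_simps)
qed

section \<open>The regularized Taylor step\<close>

lemma young_inequality_cq:
  fixes a n q \<beta> :: real
  assumes a: "a \<ge> 0" and n: "n \<ge> 0" and q: "q > 1" and \<beta>: "\<beta> > 0"
  shows "(\<beta> * (q - 1) powr (1 - q)) powr (1 / q) * a powr (q - 1) * n \<le> (a powr q + \<beta> * n powr q) / q"
proof (cases "a = 0 \<or> n = 0")
  case True
  then show ?thesis using q \<beta> a n by auto
next
  case False
  then have a0: "a > 0" and n0: "n > 0" using a n by auto
  define A where "A = a powr q / (q - 1)"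
  define B where "B = \<beta> * n powr q"
  have A0: "A > 0" and B0: "B > 0" unfolding A_def B_def using a0 n0 q \<beta> by auto
  have Y: "A powr ((q - 1) / q) * B powr (1 / q) \<le> (q - 1) / q * A + 1 / q * B"
    by (rule Youngs_inequality_0) (use q A0 B0 in \<open>auto simp: field_simps\<close>)
  have rhs: "(q - 1) / q * A + 1 / q * B = (a powr q + \<beta> * n powr q) / q"
    unfolding A_def B_def using q by (simp add: field_simps)
  have q0: "q > 0" "q - 1 > 0" using q by auto
  have lA: "A powr ((q - 1) / q) = a powr (q - 1) / (q - 1) powr ((q - 1) / q)"
    unfolding A_def using a0 q0 by (simp add: powr_divide powr_powr)
  have lB: "B powr (1 / q) = \<beta> powr (1 / q) * n"
    unfolding B_def using n0 \<beta> q0 by (simp add: powr_mult powr_powr)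
  have cq: "(\<beta> * (q - 1) powr (1 - q)) powr (1 / q) = \<beta> powr (1 / q) / (q - 1) powr ((q - 1) / q)"
  proof -
    have "(\<beta> * (q - 1) powr (1 - q)) powr (1 / q) = \<beta> powr (1 / q) * (q - 1) powr ((1 - q) / q)"
      using \<beta> q0 by (simp add: powr_mult powr_powr)
    also have "(q - 1) powr ((1 - q) / q) = 1 / (q - 1) powr ((q - 1) / q)"
    proof -
      have "(1 - q) / q = - ((q - 1) / q)" by (simp add: minus_divide_left)
      then show ?thesis using q0 by (simp add: powr_minus divide_inverse)
    qed
    finally show ?thesis by simp
  qed
  have "(\<beta> * (q - 1) powr (1 - q)) powr (1 / q) * a powr (q - 1) * n = A powr ((q - 1) / q) * B powr (1 / q)"
    unfolding cq lA lB by simp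
  then show ?thesis using Y rhs by simp
qed

lemma regularized_model_optimality:
  fixes N :: "'a::euclidean_space \<Rightarrow> real" and lr :: "'a \<Rightarrow> real" and C :: "'a set"
  assumes hd: "has_derivs g D p" and N: "is_norm N" and q: "q \<ge> 1" and \<beta>: "\<beta> \<ge> 0"
    and nq: "unif_convex N q \<beta> (\<lambda>y. N y powr q / q)" and M: "M \<ge> 0"
    and lconv: "\<And>t. 0 < t \<Longrightarrow> t < 1 \<Longrightarrow> xi + t *\<^sub>R (y - xi) \<in> C \<and> lr (xi + t *\<^sub>R (y - xi)) \<le> (1 - t) * lr xi + t * lr y"
    and opt: "\<And>w. w \<in> C \<Longrightarrow> taylor_model D p xh xi + M * N (xi - xh) powr q + lr xi
        \<le> taylor_model D p xh w + M * N (w - xh) powr q + lr w"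
  shows "0 \<le> (\<Sum>m<p. D (Suc m) xh (replicate m (xi - xh) @ [y - xi]) / fact m)
    + M * (N (y - xh) powr q - N (xi - xh) powr q - \<beta> * N (y - xi) powr q) + lr y - lr xi"
proof -
  define R where "R = (\<lambda>t. M * (N (y - xh) powr q - N (xi - xh) powr q - \<beta> * (1 - t) powr q * N (y - xi) powr q)
    + lr y - lr xi)"
  have "- (\<Sum>m<p. D (Suc m) xh (replicate m (xi - xh) @ [y - xi]) / fact m) \<le> R 0"
  proof (rule has_real_derivative_le_of_increments)
    show "((\<lambda>t. - taylor_model D p xh (xi + t *\<^sub>R (y - xi))) has_real_derivative
        - (\<Sum>m<p. D (Suc m) xh (replicate m (xi - xh) @ [y - xi]) / fact m)) (at 0)"
      by (intro DERIV_minus taylor_model_has_derivative[OF hd])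
    show "(R \<longlongrightarrow> R 0) (at_right 0)"
      unfolding R_def by (intro tendsto_intros) auto
    fix t :: real assume t: "0 < t" "t < 1"
    have "N (xi - xh + t *\<^sub>R (y - xi)) powr q - N (xi - xh) powr q
        \<le> t * (N (y - xh) powr q - N (xi - xh) powr q - \<beta> * (1 - t) powr q * N (y - xi) powr q)"
      using norm_powr_segment[OF N q \<beta> nq, of t "xi - xh" "y - xi"] t by simp
    then have "M * (N (xi - xh + t *\<^sub>R (y - xi)) powr q - N (xi - xh) powr q)
        \<le> M * (t * (N (y - xh) powr q - N (xi - xh) powr q - \<beta> * (1 - t) powr q * N (y - xi) powr q))"
      using M by (rule mult_left_mono)
    moreover have "lr (xi + t *\<^sub>R (y - xi)) - lr xi \<le> t * (lr y - lr xi)"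
      using lconv[OF t] by (simp add: algebra_simps)
    moreover have "xi + t *\<^sub>R (y - xi) - xh = xi - xh + t *\<^sub>R (y - xi)"
      by simp
    ultimately show "- taylor_model D p xh (xi + t *\<^sub>R (y - xi)) - - taylor_model D p xh (xi + 0 *\<^sub>R (y - xi))
        \<le> t * R t"
      using opt[of "xi + t *\<^sub>R (y - xi)"] lconv[OF t] unfolding R_def by (simp add: algebra_simps)
  qed
  then show ?thesis unfolding R_def by simp
qed

lemma regularized_taylor_step:
  fixes N :: "'a::euclidean_space \<Rightarrow> real" and lr :: "'a \<Rightarrow> real" and C :: "'a set"
  assumes N: "is_norm N" and hold: "holder_derivs g N D p \<nu> L" and p: "p \<ge> 1"
    and nu: "0 \<le> \<nu>" "real p + \<nu> \<ge> 2" and L: "L > 0"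
    and q: "q = real p + \<nu>" and \<beta>: "\<beta> > 0" and nq: "unif_convex N q \<beta> (\<lambda>y. N y powr q / q)"
    and M: "M > 0" and MK: "M \<le> K" and LM: "L \<le> M * q * (\<beta> * (q - 1) powr (1 - q)) powr (1 / q)"
    and lconv: "\<And>t. 0 < t \<Longrightarrow> t < 1 \<Longrightarrow> xi + t *\<^sub>R (y - xi) \<in> C \<and> lr (xi + t *\<^sub>R (y - xi)) \<le> (1 - t) * lr xi + t * lr y"
    and opt: "\<And>w. w \<in> C \<Longrightarrow> taylor_model D p xh xi + M * N (xi - xh) powr q + lr xi
        \<le> taylor_model D p xh w + M * N (w - xh) powr q + lr w"
  shows "lr xi \<le> D 1 xi [y - xi] + lr y + K * N (y - xh) powr q"
proof -
  have hd: "has_derivs g D p" using hold unfolding holder_derivs_def by blast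
  have q1: "q > 1" using q nu by simp
  define r where "r = N (xi - xh)"
  define n where "n = N (y - xi)"
  have rn: "r \<ge> 0" "n \<ge> 0" unfolding r_def n_def using is_normD(1)[OF N] by auto
  define c where "c = (\<beta> * (q - 1) powr (1 - q)) powr (1 / q)"
  have "L * (r powr (q - 1) * n) \<le> (M * q) * (c * r powr (q - 1) * n)"
    using mult_right_mono[OF LM, of "r powr (q - 1) * n"] rn unfolding c_def by (simp add: algebra_simps)
  also have "\<dots> \<le> (M * q) * ((r powr q + \<beta> * n powr q) / q)"
    using young_inequality_cq[OF rn q1 \<beta>] M q1 unfolding c_def by (intro mult_left_mono) auto
  also have "\<dots> = M * r powr q + M * \<beta> * n powr q"
    using q1 by (simp add: field_simps)
  finally have young: "L * (r powr (q - 1) * n) \<le> M * r powr q + M * \<beta> * n powr q" .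
  have "\<bar>D 1 xi [y - xi] - (\<Sum>m<p. D (Suc m) xh (replicate m (xi - xh) @ [y - xi]) / fact m)\<bar>
      \<le> L * r powr (q - 1) * n"
    using taylor_model_gradient_error[OF N hold p nu(1) L] unfolding r_def n_def q .
  moreover have "M * N (y - xh) powr q \<le> K * N (y - xh) powr q"
    using MK by (intro mult_right_mono) auto
  ultimately show ?thesis
    using regularized_model_optimality[OF hd N _ _ nq _ lconv opt] young q1 \<beta> M
    unfolding r_def[symmetric] n_def[symmetric] by (simp add: abs_le_iff algebra_simps)
qed

text \<open>The coefficient of the regularized model must be at least \<open>L / (q c\<^sub>q)\<close> for the model to be
  an upper model, and at most \<open>1 / (c\<^sub>q \<lambda> q)\<close> for the estimating sequence to absorb it.\<close>

lemma regularization_coefficient_bounds: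
  fixes L lam cq q \<theta>\<^sub>2 \<alpha> :: real
  assumes L: "L > 0" and lam: "lam > 0" and cq: "cq > 0" and q: "q > 0"
    and th: "0 < \<theta>\<^sub>2" "\<theta>\<^sub>2 \<le> 1" and Ll: "L * lam \<le> \<theta>\<^sub>2" and al: "0 \<le> \<alpha>" "\<alpha> \<le> 1"
  defines "Mc \<equiv> L powr \<alpha> / (cq * lam powr (1 - \<alpha>) * \<theta>\<^sub>2 powr \<alpha> * q)"
  shows "Mc > 0" "Mc \<le> 1 / (cq * lam * q)" "L \<le> Mc * q * cq"
proof -
  have e: "Mc = (L * lam) powr \<alpha> / \<theta>\<^sub>2 powr \<alpha> * (1 / (cq * lam * q))"
  proof -
    have h1: "lam powr (1 - \<alpha>) = lam / lam powr \<alpha>" using lam by (simp add: powr_diff)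
    have lp: "lam powr \<alpha> > 0" "\<theta>\<^sub>2 powr \<alpha> > 0" using lam th by auto
    have "Mc = L powr \<alpha> / (cq * (lam / lam powr \<alpha>) * \<theta>\<^sub>2 powr \<alpha> * q)" unfolding Mc_def h1 ..
    also have "\<dots> = (L powr \<alpha> * lam powr \<alpha>) / \<theta>\<^sub>2 powr \<alpha> * (1 / (cq * lam * q))"
      using lp lam cq q by (simp add: field_simps)
    also have "L powr \<alpha> * lam powr \<alpha> = (L * lam) powr \<alpha>" by (simp add: powr_mult)
    finally show ?thesis .
  qed
  show "Mc > 0" unfolding Mc_def using L lam cq q th by simp
  have r1: "(L * lam) powr \<alpha> / \<theta>\<^sub>2 powr \<alpha> \<le> 1"
    using powr_mono2[OF al(1), of "L * lam" \<theta>\<^sub>2] Ll L lam th by simp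
  show "Mc \<le> 1 / (cq * lam * q)" unfolding e using r1 cq lam q
    by (intro mult_left_le_one_le) auto
  define x where "x = L * lam"
  have x: "0 < x" "x \<le> 1" unfolding x_def using L lam Ll th by auto
  have xa: "x * \<theta>\<^sub>2 powr \<alpha> \<le> x powr \<alpha>"
  proof -
    have a1: "x powr (1 - \<alpha>) \<le> 1" using x al by (intro powr_le1) auto
    have a2: "\<theta>\<^sub>2 powr \<alpha> \<le> 1" using th al by (intro powr_le1) auto
    have a3: "x = x powr \<alpha> * x powr (1 - \<alpha>)" using x by (simp add: powr_add[symmetric])
    have "x * \<theta>\<^sub>2 powr \<alpha> = x powr \<alpha> * (x powr (1 - \<alpha>) * \<theta>\<^sub>2 powr \<alpha>)"
      by (subst a3) (simp add: mult.assoc)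
    also have "\<dots> \<le> x powr \<alpha> * 1"
      using a1 a2 x th by (intro mult_left_mono mult_le_one) auto
    finally show ?thesis by simp
  qed
  have "Mc * q * cq = x powr \<alpha> / (\<theta>\<^sub>2 powr \<alpha> * lam)"
    unfolding e x_def using cq q lam by (simp add: field_simps)
  moreover have "L \<le> x powr \<alpha> / (\<theta>\<^sub>2 powr \<alpha> * lam)"
    using xa lam th unfolding x_def by (simp add: le_divide_eq algebra_simps)
  ultimately show "L \<le> Mc * q * cq" by simp
qed

section \<open>Growth of the accumulated weights\<close>

lemma powr_concave_tangent:
  fixes u v s :: real
  assumes u: "0 \<le> u" "u \<le> v" and v: "0 < v" and s: "0 < s" "s \<le> 1"
  shows "s * (v - u) * v powr (s - 1) \<le> v powr s - u powr s"
proof -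
  define x where "x = u / v"
  have x: "0 \<le> x" "x \<le> 1" unfolding x_def using u v by auto
  have tx: "x powr s \<le> s * x + (1 - s)"
  proof (cases "x = 0")
    case True then show ?thesis using s by simp
  next
    case False
    then have "x powr s * 1 powr (1 - s) \<le> s * x + (1 - s) * 1"
      using x s by (intro Youngs_inequality_0) auto
    then show ?thesis by simp
  qed
  have us: "u powr s = x powr s * v powr s" unfolding x_def using u v by (simp add: powr_divide)
  have vs: "v powr s = v * v powr (s - 1)" using v by (simp add: powr_diff)
  have "u powr s \<le> (s * x + (1 - s)) * v powr s" unfolding us using tx v by (intro mult_right_mono) auto
  also have "\<dots> = v powr s - s * (v - u) * v powr (s - 1)"
    unfolding x_def using v by (simp add: vs field_simps)
  finally show ?thesis by simp
qed

lemma powr_root_increment: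
  fixes u a q C :: real
  assumes q: "q \<ge> 1" and C: "C > 0" and u: "u \<ge> 0" and a: "a > 0"
    and ratio: "C * (u + a) powr (q - 1) \<le> a powr q"
  shows "C powr (1 / q) / q \<le> (u + a) powr (1 / q) - u powr (1 / q)"
proof -
  define s where "s = 1 / q"
  define v where "v = u + a"
  have s: "0 < s" "s \<le> 1" unfolding s_def using q by auto
  have v: "v > 0" unfolding v_def using u a by simp
  have "(C * v powr (q - 1)) powr s \<le> (a powr q) powr s"
    using ratio C v s unfolding v_def by (intro powr_mono2) auto
  then have root: "C powr s * v powr ((q - 1) * s) \<le> a"
    using C v a q unfolding s_def by (simp add: powr_mult powr_powr)
  have "(q - 1) * s + (s - 1) = 0" unfolding s_def using q by (simp add: field_simps)
  then have "s * C powr s = s * (C powr s * v powr ((q - 1) * s)) * v powr (s - 1)"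
    using v by (simp add: powr_add[symmetric] mult.assoc)
  also have "\<dots> \<le> s * (v - u) * v powr (s - 1)"
    using root s v unfolding v_def by (intro mult_right_mono mult_left_mono) auto
  also have "\<dots> \<le> v powr s - u powr s"
    by (rule powr_concave_tangent) (use u a s in \<open>auto simp: v_def\<close>)
  finally show ?thesis unfolding s_def v_def by simp
qed

lemma weight_sum_lower_bound:
  fixes a A :: "nat \<Rightarrow> real" and q C :: real
  assumes q: "q \<ge> 1" and C: "C > 0" and a_pos: "\<And>i. i \<ge> 1 \<Longrightarrow> a i > 0"
    and A_def: "\<And>i. A i = (\<Sum>j=1..i. a j)"
    and ratio: "\<And>i. i \<ge> 1 \<Longrightarrow> C * A i powr (q - 1) \<le> a i powr q"
  shows "A k \<ge> C * (real k / q) powr q"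
proof -
  have A_nonneg: "A k \<ge> 0" for k
    unfolding A_def using a_pos by (intro sum_nonneg) (auto intro: less_imp_le)
  have root: "real k * C powr (1 / q) / q \<le> A k powr (1 / q)" for k
  proof (induction k)
    case 0
    then show ?case using A_def by simp
  next
    case (Suc k)
    have "A (Suc k) = A k + a (Suc k)" using A_def by simp
    then have "C powr (1 / q) / q \<le> A (Suc k) powr (1 / q) - A k powr (1 / q)"
      using powr_root_increment[OF q C A_nonneg a_pos] ratio[of "Suc k"] by simp
    with Suc.IH show ?case by (simp add: add_divide_distrib distrib_right)
  qed
  have "C * (real k / q) powr q = (C powr (1 / q)) powr q * (real k / q) powr q"
    using C q by (simp add: powr_powr)
  also have "\<dots> = (real k * C powr (1 / q) / q) powr q"
    by (simp add: powr_mult[symmetric] mult.commute)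
  also have "\<dots> \<le> (A k powr (1 / q)) powr q"
    using root[of k] C q by (intro powr_mono2) auto
  also have "\<dots> = A k"
    using A_nonneg[of k] q by (cases "A k = 0") (simp_all add: powr_powr)
  finally show ?thesis .
qed

section \<open>The accelerated method\<close>

locale accelerated_tensor_method =
  fixes N :: "'a::euclidean_space \<Rightarrow> real"
    and g :: "'a \<Rightarrow> real" and D :: "nat \<Rightarrow> 'a \<Rightarrow> 'a list \<Rightarrow> real"
    and l :: "'a \<Rightarrow> ereal" and h :: "'a \<Rightarrow> real"
    and p :: nat and \<nu> L q \<gamma> \<beta> c\<^sub>q \<alpha> \<theta>\<^sub>1 \<theta>\<^sub>2 :: real
    and x0 :: 'a and a A lam :: "nat \<Rightarrow> real" and x z xhat :: "nat \<Rightarrow> 'a"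
  assumes norm: "is_norm N"
    and p: "p \<ge> 1" and nu: "0 \<le> \<nu>" "real p + \<nu> \<ge> 2" and L: "L > 0"
    and g_convex: "convex_on UNIV g"
    and g_holder: "holder_derivs g N D p \<nu> L"
    and l: "proper_closed_convex l"
    and q_def: "q = real p + \<nu>"
    and gamma: "\<gamma> > 0" and beta: "\<beta> > 0"
    and norm_q_unif: "unif_convex N q \<beta> (\<lambda>y. N y powr q / q)"
    and cq_def: "c\<^sub>q = (\<beta> * (q - 1) powr (1 - q)) powr (1 / q)"
    and x0: "l x0 < \<infinity>"
    and h_convex: "convex_on UNIV h"
    and h_nonneg: "\<And>y. h y \<ge> 0"
    and h_x0: "h x0 = 0"
    and h_unif: "unif_convex N q \<gamma> h"
    and alpha: "0 \<le> \<alpha>" "\<alpha> \<le> 1"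
    and a_pos: "\<And>i. i \<ge> 1 \<Longrightarrow> a i > 0"
    and A_def: "\<And>i. A i = (\<Sum>j=1..i. a j)"
    and lambda_def: "\<And>i. lam i = a i powr q / (c\<^sub>q * \<gamma> * A i powr (q - 1))"
    and x_0: "x 0 = x0" and z_0: "z 0 = x0"
    and xhat_def: "\<And>i. i \<ge> 1 \<Longrightarrow>
        xhat (i - 1) = (a i / A i) *\<^sub>R z (i - 1) + (A (i - 1) / A i) *\<^sub>R x (i - 1)"
    and x_min: "\<And>i y. i \<ge> 1 \<Longrightarrow>
        ereal (taylor_model D p (xhat (i - 1)) (x i)
          + L powr \<alpha> / (c\<^sub>q * lam i powr (1 - \<alpha>) * \<theta>\<^sub>2 powr \<alpha> * q) * N (x i - xhat (i - 1)) powr q)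
          + l (x i)
        \<le> ereal (taylor_model D p (xhat (i - 1)) y
          + L powr \<alpha> / (c\<^sub>q * lam i powr (1 - \<alpha>) * \<theta>\<^sub>2 powr \<alpha> * q) * N (y - xhat (i - 1)) powr q)
          + l y"
    and z_min: "\<And>i y. i \<ge> 1 \<Longrightarrow>
        (\<Sum>j=1..i. ereal (a j) * (ereal (g (x j) + D 1 (x j) [z i - x j]) + l (z i))) + ereal (h (z i))
        \<le> (\<Sum>j=1..i. ereal (a j) * (ereal (g (x j) + D 1 (x j) [y - x j]) + l y)) + ereal (h y)"
    and theta: "0 < \<theta>\<^sub>1" "\<theta>\<^sub>1 \<le> \<theta>\<^sub>2" "\<theta>\<^sub>2 \<le> 1"
    and theta_lambda: "\<And>i. i \<ge> 1 \<Longrightarrow> \<theta>\<^sub>1 \<le> L * lam i \<and> L * lam i \<le> \<theta>\<^sub>2"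
begin

text \<open>On \<open>dom_l\<close> the objective is the real number \<open>F\<close>; outside it \<open>lr\<close> is the junk value
  \<open>real_of_ereal \<infinity> = 0\<close>. \<open>linearization j\<close> is the paper's \<open>f\<close>-hat at \<open>x j\<close>, and
  \<open>estimate i\<close> is the estimating function minimized by \<open>z i\<close>.\<close>

definition dom_l :: "'a set" where "dom_l = {y. l y \<noteq> \<infinity>}"

definition lr :: "'a \<Rightarrow> real" where "lr y = real_of_ereal (l y)"

definition F :: "'a \<Rightarrow> real" where "F y = g y + lr y"

definition reg_coeff :: "nat \<Rightarrow> real" where
  "reg_coeff i = L powr \<alpha> / (c\<^sub>q * lam i powr (1 - \<alpha>) * \<theta>\<^sub>2 powr \<alpha> * q)"

definition linearization :: "nat \<Rightarrow> 'a \<Rightarrow> real" where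
  "linearization j y = g (x j) + D 1 (x j) [y - x j] + lr y"

definition estimate :: "nat \<Rightarrow> 'a \<Rightarrow> real" where
  "estimate i y = (\<Sum>j=1..i. a j * linearization j y) + h y"

lemma q_ge_2: "q \<ge> 2"
  using q_def nu by simp

lemma cq_pos: "c\<^sub>q > 0"
  unfolding cq_def using beta q_ge_2 by simp

lemma A_Suc: "A (Suc i) = A i + a (Suc i)"
  using A_def by simp

lemma A_pos: "i \<ge> 1 \<Longrightarrow> A i > 0"
  unfolding A_def using a_pos by (intro sum_pos) auto

lemma A_nonneg: "A i \<ge> 0"
  unfolding A_def using a_pos by (intro sum_nonneg) (auto intro: less_imp_le)

lemma lam_pos:
  assumes "i \<ge> 1" shows "lam i > 0"
  unfolding lambda_def using a_pos[OF assms] A_pos[OF assms] cq_pos gamma by simp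

lemma l_eq_lr: "y \<in> dom_l \<Longrightarrow> l y = ereal (lr y)"
  using l unfolding proper_closed_convex_def dom_l_def lr_def by (cases "l y") auto

lemma x0_in_dom: "x0 \<in> dom_l"
  using x0 unfolding dom_l_def by auto

lemma dom_l_convex_combination:
  assumes "u \<in> dom_l" "v \<in> dom_l" "0 \<le> t" "t \<le> 1"
  shows "(1 - t) *\<^sub>R u + t *\<^sub>R v \<in> dom_l \<and> lr ((1 - t) *\<^sub>R u + t *\<^sub>R v) \<le> (1 - t) * lr u + t * lr v"
  using proper_closed_convexD[OF l, of u v t] assms unfolding dom_l_def lr_def by blast

lemma x_in_dom: "x i \<in> dom_l"
proof (cases i)
  case 0
  then show ?thesis using x_0 x0_in_dom by simp
next
  case (Suc i')
  have "ereal (taylor_model D p (xhat i') (x i) + reg_coeff i * N (x i - xhat i') powr q) + l (x i) < \<infinity>"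
    using x_min[of i x0] l_eq_lr[OF x0_in_dom] Suc unfolding reg_coeff_def
    by (auto simp del: ereal_less_PInfty intro: le_less_trans)
  then show ?thesis unfolding dom_l_def by auto
qed

lemma x_minimal:
  assumes "y \<in> dom_l"
  shows "taylor_model D p (xhat i) (x (Suc i)) + reg_coeff (Suc i) * N (x (Suc i) - xhat i) powr q + lr (x (Suc i))
    \<le> taylor_model D p (xhat i) y + reg_coeff (Suc i) * N (y - xhat i) powr q + lr y"
  using x_min[of "Suc i" y] l_eq_lr[OF assms] l_eq_lr[OF x_in_dom] unfolding reg_coeff_def by simp

lemma estimate_ereal:
  assumes "y \<in> dom_l"
  shows "(\<Sum>j=1..i. ereal (a j) * (ereal (g (x j) + D 1 (x j) [y - x j]) + l y)) + ereal (h y)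
    = ereal (estimate i y)"
  using l_eq_lr[OF assms] unfolding estimate_def linearization_def by simp

lemma z_in_dom: "z i \<in> dom_l"
proof (cases i)
  case 0
  then show ?thesis using z_0 x0_in_dom by simp
next
  case (Suc i')
  then have i: "i \<ge> 1" by simp
  show ?thesis
  proof (rule ccontr)
    assume "z i \<notin> dom_l"
    then have S: "(\<Sum>j=1..i. ereal (a j) * (ereal (g (x j) + D 1 (x j) [z i - x j]) + l (z i))) = \<infinity>"
      unfolding sum_Pinfty dom_l_def using a_pos[OF i] i by (intro conjI bexI[of _ i]) auto
    have "(\<Sum>j=1..i. ereal (a j) * (ereal (g (x j) + D 1 (x j) [z i - x j]) + l (z i))) + ereal (h (z i))
        \<le> ereal (estimate i x0)"
      using z_min[OF i, of x0] unfolding estimate_ereal[OF x0_in_dom] .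
    then show False unfolding S by simp
  qed
qed

lemma z_minimal: "y \<in> dom_l \<Longrightarrow> estimate i (z i) \<le> estimate i y"
proof (cases i)
  case 0
  then show "estimate i (z i) \<le> estimate i y"
    unfolding estimate_def using z_0 h_x0 h_nonneg[of y] by simp
next
  case (Suc i')
  assume "y \<in> dom_l"
  then show ?thesis
    using z_min[of i y] Suc unfolding estimate_ereal[OF z_in_dom] estimate_ereal[OF \<open>y \<in> dom_l\<close>] by simp
qed

lemma D1_linear: "linear (\<lambda>v. D 1 u [v])"
  using multilinear_linear_head[OF has_derivs_multilinear, of g D p 0 "[]" u] g_holder p
  unfolding holder_derivs_def by simp

lemma g_above_tangent: "g u + D 1 u [v - u] \<le> g v"
proof -
  have "has_derivs g D p" using g_holder unfolding holder_derivs_def by blast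
  then have "((\<lambda>y. D 0 y []) has_derivative (\<lambda>v. D 1 u [v])) (at u)" "(\<lambda>y. D 0 y []) = g"
    using has_derivsD[of g D p 0 "[]" u] p unfolding has_derivs_def by auto
  then show ?thesis using convex_gradient_inequality[OF g_convex] by metis
qed

lemma linearization_le_F: "linearization j y \<le> F y"
  unfolding linearization_def F_def using g_above_tangent[of "x j" y] by simp

lemma linearization_convex:
  assumes "u \<in> dom_l" "v \<in> dom_l" "0 \<le> t" "t \<le> 1"
  shows "linearization j ((1 - t) *\<^sub>R u + t *\<^sub>R v) \<le> (1 - t) * linearization j u + t * linearization j v"
proof -
  have "(1 - t) *\<^sub>R u + t *\<^sub>R v - x j = (1 - t) *\<^sub>R (u - x j) + t *\<^sub>R (v - x j)"
    by (simp add: algebra_simps)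
  then have "D 1 (x j) [(1 - t) *\<^sub>R u + t *\<^sub>R v - x j] = (1 - t) * D 1 (x j) [u - x j] + t * D 1 (x j) [v - x j]"
    using linear_add[OF D1_linear] linear_scaleR_real_valued[OF D1_linear] by simp
  then show ?thesis
    using dom_l_convex_combination[OF assms] unfolding linearization_def by (simp add: algebra_simps)
qed

lemma estimate_growth:
  assumes y: "y \<in> dom_l"
  shows "estimate i (z i) + \<gamma> / q * N (y - z i) powr q \<le> estimate i y"
proof -
  define \<phi> where "\<phi> = (\<lambda>y. \<Sum>j=1..i. a j * linearization j y)"
  have segment: "z i + t *\<^sub>R (y - z i) = (1 - t) *\<^sub>R z i + t *\<^sub>R y" for t
    by (simp add: algebra_simps)
  have "h (z i) + \<phi> (z i) + \<gamma> / q * N (y - z i) powr q \<le> h y + \<phi> y"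
  proof (rule unif_convex_min_growth[OF norm h_convex h_unif])
    fix t :: real assume t: "0 < t" "t < 1"
    have "z i + t *\<^sub>R (y - z i) \<in> dom_l"
      unfolding segment using dom_l_convex_combination[OF z_in_dom y, of t] t by auto
    then show "h (z i) + \<phi> (z i) \<le> h (z i + t *\<^sub>R (y - z i)) + \<phi> (z i + t *\<^sub>R (y - z i))"
      using z_minimal unfolding estimate_def \<phi>_def by (simp add: add.commute)
    have "a j * linearization j ((1 - t) *\<^sub>R z i + t *\<^sub>R y)
        \<le> (1 - t) * (a j * linearization j (z i)) + t * (a j * linearization j y)" if "j \<in> {1..i}" for j
      using mult_left_mono[OF linearization_convex[OF z_in_dom y, of t j], of "a j"] a_pos[of j] that t
      by (simp add: algebra_simps)
    then show "\<phi> (z i + t *\<^sub>R (y - z i)) \<le> (1 - t) * \<phi> (z i) + t * \<phi> y"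
      unfolding segment \<phi>_def by (auto simp: sum_distrib_left sum.distrib[symmetric] intro: sum_mono)
  qed (use q_ge_2 gamma in auto)
  then show ?thesis unfolding estimate_def \<phi>_def by (simp add: algebra_simps)
qed

lemma linearization_interpolation:
  fixes i :: nat
  assumes u: "u \<in> dom_l" and w: "w \<in> dom_l"
  defines "v \<equiv> (A i / A (Suc i)) *\<^sub>R u + (a (Suc i) / A (Suc i)) *\<^sub>R w"
  shows "v \<in> dom_l" "A (Suc i) * linearization j v \<le> A i * linearization j u + a (Suc i) * linearization j w"
proof -
  have A': "A (Suc i) > 0" using A_pos by simp
  have t: "0 \<le> a (Suc i) / A (Suc i)" "a (Suc i) / A (Suc i) \<le> 1" "1 - a (Suc i) / A (Suc i) = A i / A (Suc i)"
    using A' A_Suc[of i] A_nonneg[of i] a_pos[of "Suc i"] by (auto simp: field_simps)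
  show "v \<in> dom_l" using dom_l_convex_combination[OF u w t(1,2)] unfolding t(3) v_def by blast
  have "A (Suc i) * linearization j v
      \<le> A (Suc i) * ((A i / A (Suc i)) * linearization j u + (a (Suc i) / A (Suc i)) * linearization j w)"
    using linearization_convex[OF u w t(1,2), of j] A' unfolding t(3) v_def by simp
  also have "\<dots> = A i * linearization j u + a (Suc i) * linearization j w"
    using A' by (simp add: field_simps)
  finally show "A (Suc i) * linearization j v \<le> A i * linearization j u + a (Suc i) * linearization j w" .
qed

lemma model_step:
  assumes u: "u \<in> dom_l"
  shows "F (x (Suc i)) \<le> linearization (Suc i) u + N (u - xhat i) powr q / (c\<^sub>q * lam (Suc i) * q)"
proof -
  obtain M_pos: "reg_coeff (Suc i) > 0" and M_le: "reg_coeff (Suc i) \<le> 1 / (c\<^sub>q * lam (Suc i) * q)"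
    and L_le: "L \<le> reg_coeff (Suc i) * q * c\<^sub>q"
    using regularization_coefficient_bounds[OF L lam_pos[of "Suc i"] cq_pos _ _ theta(3) _ alpha]
      theta_lambda[of "Suc i"] q_ge_2 theta unfolding reg_coeff_def by auto
  have "lr (x (Suc i)) \<le> D 1 (x (Suc i)) [u - x (Suc i)] + lr u + 1 / (c\<^sub>q * lam (Suc i) * q) * N (u - xhat i) powr q"
  proof (rule regularized_taylor_step[OF norm g_holder p nu L q_def beta norm_q_unif M_pos M_le])
    show "L \<le> reg_coeff (Suc i) * q * (\<beta> * (q - 1) powr (1 - q)) powr (1 / q)"
      using L_le cq_def by simp
    fix t :: real assume t: "0 < t" "t < 1"
    have "x (Suc i) + t *\<^sub>R (u - x (Suc i)) = (1 - t) *\<^sub>R x (Suc i) + t *\<^sub>R u"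
      by (simp add: algebra_simps)
    then show "x (Suc i) + t *\<^sub>R (u - x (Suc i)) \<in> dom_l \<and>
        lr (x (Suc i) + t *\<^sub>R (u - x (Suc i))) \<le> (1 - t) * lr (x (Suc i)) + t * lr u"
      using dom_l_convex_combination[OF x_in_dom u, of t] t by simp
  qed (rule x_minimal)
  then show ?thesis unfolding F_def linearization_def by simp
qed

lemma step_scaling: "A (Suc i) * ((a (Suc i) / A (Suc i)) powr q / (c\<^sub>q * lam (Suc i) * q)) = \<gamma> / q"
proof -
  have a': "a (Suc i) > 0" and A': "A (Suc i) > 0" using a_pos A_pos by auto
  have "A (Suc i) * A (Suc i) powr (q - 1) = A (Suc i) powr q"
    using A' by (simp add: powr_mult_base)
  then show ?thesis
    unfolding lambda_def using a' A' cq_pos q_ge_2 by (simp add: powr_divide field_simps)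
qed

lemma estimate_invariant: "A i * F (x i) \<le> estimate i (z i)"
proof (induction i)
  case 0
  show ?case unfolding estimate_def using A_def z_0 h_x0 by simp
next
  case (Suc i)
  define u where "u = (A i / A (Suc i)) *\<^sub>R x i + (a (Suc i) / A (Suc i)) *\<^sub>R z (Suc i)"
  have u: "u \<in> dom_l"
    and interp: "A (Suc i) * linearization (Suc i) u
      \<le> A i * linearization (Suc i) (x i) + a (Suc i) * linearization (Suc i) (z (Suc i))"
    using linearization_interpolation[OF x_in_dom z_in_dom] unfolding u_def by blast+
  have "u - xhat i = (a (Suc i) / A (Suc i)) *\<^sub>R (z (Suc i) - z i)"
    using xhat_def[of "Suc i"] unfolding u_def by (simp add: algebra_simps)
  then have dist: "N (u - xhat i) powr q = (a (Suc i) / A (Suc i)) powr q * N (z (Suc i) - z i) powr q"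
    using powr_mult[of "a (Suc i) / A (Suc i)" "N (z (Suc i) - z i)" q] is_normD(1,3)[OF norm]
      a_pos[of "Suc i"] A_pos[of "Suc i"] by simp
  have "A (Suc i) * F (x (Suc i))
      \<le> A (Suc i) * (linearization (Suc i) u + N (u - xhat i) powr q / (c\<^sub>q * lam (Suc i) * q))"
    using model_step[OF u] A_pos[of "Suc i"] by simp
  also have "\<dots> = A (Suc i) * linearization (Suc i) u
      + A (Suc i) * ((a (Suc i) / A (Suc i)) powr q / (c\<^sub>q * lam (Suc i) * q)) * N (z (Suc i) - z i) powr q"
    unfolding dist by (simp add: algebra_simps)
  also have "\<dots> = A (Suc i) * linearization (Suc i) u + \<gamma> / q * N (z (Suc i) - z i) powr q"
    unfolding step_scaling ..
  also have "\<dots> \<le> A i * F (x i) + a (Suc i) * linearization (Suc i) (z (Suc i)) + \<gamma> / q * N (z (Suc i) - z i) powr q"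
    using interp mult_left_mono[OF linearization_le_F A_nonneg] by (smt (verit))
  also have "\<dots> \<le> estimate i (z (Suc i)) + a (Suc i) * linearization (Suc i) (z (Suc i))"
    using Suc.IH estimate_growth[OF z_in_dom, of i "Suc i"] by simp
  also have "\<dots> = estimate (Suc i) (z (Suc i))"
    unfolding estimate_def by simp
  finally show ?case .
qed

lemma A_lower_bound: "A k \<ge> \<theta>\<^sub>1 * c\<^sub>q * \<gamma> / L * (real k / q) powr q"
proof (rule weight_sum_lower_bound[OF _ _ a_pos A_def])
  show "q \<ge> 1" "\<theta>\<^sub>1 * c\<^sub>q * \<gamma> / L > 0" using q_ge_2 theta cq_pos gamma L by auto
  fix i :: nat assume i: "i \<ge> 1"
  have "\<theta>\<^sub>1 \<le> L * (a i powr q / (c\<^sub>q * \<gamma> * A i powr (q - 1)))"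
    using theta_lambda[OF i] lambda_def[of i] by simp
  then show "\<theta>\<^sub>1 * c\<^sub>q * \<gamma> / L * A i powr (q - 1) \<le> a i powr q"
    using A_pos[OF i] cq_pos gamma L by (simp add: field_simps)
qed

lemma objective_gap:
  assumes y: "y \<in> dom_l" and k: "k \<ge> 1"
  shows "F (x k) - F y \<le> h y / A k"
proof -
  have "estimate k y \<le> (\<Sum>j=1..k. a j * F y) + h y"
    unfolding estimate_def
  proof (intro add_right_mono sum_mono)
    fix j assume "j \<in> {1..k}"
    then show "a j * linearization j y \<le> a j * F y"
      using a_pos[of j] by (intro mult_left_mono linearization_le_F) auto
  qed
  also have "\<dots> = A k * F y + h y"
    by (simp add: A_def sum_distrib_right)
  finally have "A k * (F (x k) - F y) \<le> h y"
    using estimate_invariant[of k] z_minimal[OF y, of k] by (simp add: algebra_simps)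
  then show ?thesis
    using A_pos[OF k] by (simp add: field_simps)
qed

end

theorem mainTheorem10:

  fixes N :: "'a::euclidean_space \<Rightarrow> real"
    and g :: "'a \<Rightarrow> real" and D :: "nat \<Rightarrow> 'a \<Rightarrow> 'a list \<Rightarrow> real"
    and l :: "'a \<Rightarrow> ereal" and f :: "'a \<Rightarrow> ereal"
    and h :: "'a \<Rightarrow> real"
    and p :: nat and \<nu> L q \<gamma> \<beta> c\<^sub>q \<alpha> \<theta>\<^sub>1 \<theta>\<^sub>2 :: real
    and x0 xstar :: 'a
    and a A lam :: "nat \<Rightarrow> real"
    and x z xhat :: "nat \<Rightarrow> 'a"
  assumes norm: "is_norm N"
    and p: "p \<ge> 1" and nu: "0 \<le> \<nu>" "\<nu> \<le> 1" "real p + \<nu> \<ge> 2" and L: "L > 0"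
    and g_convex: "convex_on UNIV g"
    and g_holder: "holder_derivs g N D p \<nu> L"
    and l: "proper_closed_convex l"
    and f_def: "\<And>y. f y = ereal (g y) + l y"
    and xstar: "\<And>y. f xstar \<le> f y"
    and q_def: "q = real p + \<nu>"
    and gamma: "\<gamma> > 0" and beta: "\<beta> > 0"
    and norm_q_unif: "unif_convex N q \<beta> (\<lambda>y. N y powr q / q)"
    and cq_def: "c\<^sub>q = (\<beta> * (q - 1) powr (1 - q)) powr (1 / q)"
    and x0: "l x0 < \<infinity>"
    and h_convex: "convex_on UNIV h"
    and h_nonneg: "\<And>y. h y \<ge> 0"
    and h_zero: "\<And>y. h y = 0 \<longleftrightarrow> y = x0"
    and h_unif: "unif_convex N q \<gamma> h"
    and alpha: "0 \<le> \<alpha>" "\<alpha> \<le> 1"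
    and a_pos: "\<And>i. i \<ge> 1 \<Longrightarrow> a i > 0"
    and A_def: "\<And>i. A i = (\<Sum>j=1..i. a j)"
    and lambda_def: "\<And>i. lam i = a i powr q / (c\<^sub>q * \<gamma> * A i powr (q - 1))"
    and x_0: "x 0 = x0" and z_0: "z 0 = x0"
    and xhat_def: "\<And>i. i \<ge> 1 \<Longrightarrow>
        xhat (i - 1) = (a i / A i) *\<^sub>R z (i - 1) + (A (i - 1) / A i) *\<^sub>R x (i - 1)"
    and x_min: "\<And>i y. i \<ge> 1 \<Longrightarrow>
        ereal (taylor_model D p (xhat (i - 1)) (x i)
          + L powr \<alpha> / (c\<^sub>q * lam i powr (1 - \<alpha>) * \<theta>\<^sub>2 powr \<alpha> * q) * N (x i - xhat (i - 1)) powr q)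
          + l (x i)
        \<le> ereal (taylor_model D p (xhat (i - 1)) y
          + L powr \<alpha> / (c\<^sub>q * lam i powr (1 - \<alpha>) * \<theta>\<^sub>2 powr \<alpha> * q) * N (y - xhat (i - 1)) powr q)
          + l y"
    and z_min: "\<And>i y. i \<ge> 1 \<Longrightarrow>
        (\<Sum>j=1..i. ereal (a j) * (ereal (g (x j) + D 1 (x j) [z i - x j]) + l (z i))) + ereal (h (z i))
        \<le> (\<Sum>j=1..i. ereal (a j) * (ereal (g (x j) + D 1 (x j) [y - x j]) + l y)) + ereal (h y)"
    and theta: "0 < \<theta>\<^sub>1" "\<theta>\<^sub>1 \<le> \<theta>\<^sub>2" "\<theta>\<^sub>2 \<le> 1"
    and theta_lambda: "\<And>i. i \<ge> 1 \<Longrightarrow> \<theta>\<^sub>1 \<le> L * lam i \<and> L * lam i \<le> \<theta>\<^sub>2"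
  shows "\<forall>k\<ge>1.
     A k \<ge> \<theta>\<^sub>1 * c\<^sub>q * \<gamma> / L * (real k / (real p + \<nu>)) powr (real p + \<nu>)
     \<and> f (x k) - f xstar \<le> ereal (h xstar / A k)
     \<and> h xstar / A k \<le> L / (\<theta>\<^sub>1 * c\<^sub>q * \<gamma>) * h xstar * ((real p + \<nu>) / real k) powr (real p + \<nu>)"
proof -
  interpret accelerated_tensor_method N g D l h p \<nu> L q \<gamma> \<beta> c\<^sub>q \<alpha> \<theta>\<^sub>1 \<theta>\<^sub>2 x0 a A lam x z xhat
    by unfold_locales (use assms in auto)
  have f_eq: "f y = ereal (F y)" if "y \<in> dom_l" for y
    using f_def[of y] l_eq_lr[OF that] unfolding F_def by simp
  have xstar_dom: "xstar \<in> dom_l"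
    using xstar[of x0] f_def[of xstar] f_eq[OF x0_in_dom] unfolding dom_l_def by auto
  show ?thesis
  proof (intro allI impI conjI)
    fix k :: nat assume k: "k \<ge> 1"
    have A_bound: "A k \<ge> \<theta>\<^sub>1 * c\<^sub>q * \<gamma> / L * (real k / q) powr q"
      by (rule A_lower_bound)
    then show "A k \<ge> \<theta>\<^sub>1 * c\<^sub>q * \<gamma> / L * (real k / (real p + \<nu>)) powr (real p + \<nu>)"
      unfolding q_def .
    show "f (x k) - f xstar \<le> ereal (h xstar / A k)"
      using objective_gap[OF xstar_dom k] unfolding f_eq[OF x_in_dom] f_eq[OF xstar_dom] by simp
    have "h xstar / A k \<le> h xstar / (\<theta>\<^sub>1 * c\<^sub>q * \<gamma> / L * (real k / q) powr q)"
      using A_bound A_pos[OF k] h_nonneg[of xstar] theta L cq_pos gamma k q_ge_2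
      by (intro divide_left_mono) auto
    also have "\<dots> = L / (\<theta>\<^sub>1 * c\<^sub>q * \<gamma>) * h xstar * (q / real k) powr q"
      using k q_ge_2 by (simp add: powr_divide)
    finally show "h xstar / A k \<le> L / (\<theta>\<^sub>1 * c\<^sub>q * \<gamma>) * h xstar * ((real p + \<nu>) / real k) powr (real p + \<nu>)"
      unfolding q_def .
  qed
qed

end
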